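(* Assume $\eta_{i,S}=0$ for all $i\in\{1,\dots,N\}$, and let $M$ be a positive integer. Then for $n\in\{1,\dots,M\}$: $$\ln S_{nT/M}=\ln S_{(n-1)T/M}+\tfrac{T}{M}\tilde\mu_S+\varepsilon_{n,S},$$ $$\operatorname{diag}\Big(\Big(\tfrac{T_i}{T_i-nT/M}\Big)^{\kappa_i}\Big)Z_{nT/M}=\operatorname{diag}\Big(\Big(\tfrac{T_i}{T_i-(n-1)T/M}\Big)^{\kappa_i}\Big)Z_{(n-1)T/M}+\operatorname{diag}(\phi_{n,i})\,m+\varepsilon_{n,Z},$$ $$\log F_{nT/M,i}=Z_{nT/M,i}+\log S_{nT/M,i}+r\big(T_i-\tfrac{nT}{M}\big),\quad i=1,\dots,N,$$ where $\ln S_t$ is taken componentwise, $\tilde\mu_S:=(\mu_{1,S}-\frac12\sigma_{1,S}^2,\dots,\mu_{N,S}-\frac12\sigma_{N,S}^2)^\top$, $$\phi_{n,i}:=\begin{cases}\dfrac{T_i^{\kappa_i}}{\kappa_i-1}\Big(\big(T_i-\tfrac{nT}{M}\big)^{1-\kappa_i}-\big(T_i-\tfrac{(n-1)T}{M}\big)^{1-\kappa_i}\Big),&\kappa_i\ne1,\\[1ex] T_i\ln\Big(\dfrac{T_i-(n-1)T/M}{T_i-nT/M}\Big),&\kappa_i=1,\end{cases}$$ and $\{\varepsilon_n=(\varepsilon_{n,S},\varepsilon_{n,Z})\}_{n=1}^M$ are independent Gaussian random vectors with $\mathbb E(\varepsilon_n)=0$, $\mathbb E(\varepsilon_{n,S}\varepsilon_{n,S}^\top)=\frac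 TM\Sigma_S$, $\mathbb E(\varepsilon_{n,S}\varepsilon_{n,Z}^\top)=(\Sigma_{FS}^\top-\Sigma_S)\operatorname{diag}(\phi_{n,i})$, and $\mathbb E(\varepsilon_{n,Z}\varepsilon_{n,Z}^\top)=[c_{ij;n}]_{N\times N}$ with $$c_{ij;n}:=\beta_{ij}\int_{(n-1)T/M}^{nT/M}\Big(\frac{T_i}{T_i-s}\Big)^{\kappa_i}\Big(\frac{T_j}{T_j-s}\Big)^{\kappa_j}ds,$$ $\beta_{ij}$ being the $(i,j)$ entry of $\Sigma_F+\Sigma_S-\Sigma_{FS}-\Sigma_{FS}^\top$.
   Context: Market model: $N\ge1$ is an integer, $r\ge0$ a constant interest rate, $T>0$ the trading horizon, and $T_1,\dots,T_N$ futures maturities with $T<T_i$ for all $i$. On a filtered probability space with Brownian filtration satisfying the usual conditions, $W_t=(W_{t,1},\dots,W_{t,2N})^\top$ is a standard $2N$-dimensional Brownian motion. Let $\tilde\Sigma=[\tilde\sigma_{ij}]$ be a real $2N\times2N$ lower triangular matrix ($\tilde\sigma_{ij}=0$ for $j>i$) and $\Sigma:=\tilde\Sigma\tilde\Sigma^\top=\begin{pmatrix}\Sigma_F&\Sigma_{FS}\\ \Sigma_{FS}^\top&\Sigma_S\end{pmatrix}$ ($N\times N$ blocks), assumed positive definite; $\sigma_{i,F}:=\sqrt{\Sigma_{ii}}$, $\sigma_{i,S}:=\sqrt{\Sigma_{N+i,N+i}}$. Constants $\mu_{i,F},\mu_{i,S},\eta_{i,F},\eta_{i,S}$ satisfy $\eta_{i,F}<\eta_{i,S}$.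 Futures prices $F_{t,i}$ and spot prices $S_{t,i}$ satisfy $dF_{t,i}=F_{t,i}\big[(\mu_{i,F}+\tfrac{\eta_{i,F}}{T_i-t}Z_{t,i})dt+\sum_{j=1}^{i}\tilde\sigma_{i,j}dW_{t,j}\big]$, $dS_{t,i}=S_{t,i}\big[(\mu_{i,S}+\tfrac{\eta_{i,S}}{T_i-t}Z_{t,i})dt+\sum_{j=1}^{N+i}\tilde\sigma_{N+i,j}dW_{t,j}\big]$, where $Z_{t,i}:=\log(F_{t,i}/S_{t,i})-r(T_i-t)$, $0\le t\le T$. Vectors: $S_t=(S_{t,i})_i$, $Z_t=(Z_{t,i})_i$; $m=(m_i)$ with $m_i=r+\mu_{i,F}-\mu_{i,S}-\frac12(\sigma_{i,F}^2-\sigma_{i,S}^2)$; $\kappa_i:=\eta_{i,S}-\eta_{i,F}>0$. For a vector $(a_1,\dots,a_N)$, $\operatorname{diag}(a_i)$ is the diagonal matrix with these entries. *)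

theory Defs
  imports "HOL-Probability.Probability"
begin

text \<open>Indices are 1-based: futures/spot indices i range over {1..N},
Brownian components over {1..2N}. Matrices are functions nat => nat => real.\<close>

definition cov_of :: "nat \<Rightarrow> (nat \<Rightarrow> nat \<Rightarrow> real) \<Rightarrow> nat \<Rightarrow> nat \<Rightarrow> real" where
  "cov_of d tS i j = (\<Sum>k\<in>{1..d}. tS i k * tS j k)"

definition lower_triangular :: "nat \<Rightarrow> (nat \<Rightarrow> nat \<Rightarrow> real) \<Rightarrow> bool" where
  "lower_triangular d A \<longleftrightarrow> (\<forall>i\<in>{1..d}. \<forall>j\<in>{1..d}. i < j \<longrightarrow> A i j = 0)"

definition pos_def :: "nat \<Rightarrow> (nat \<Rightarrow> nat \<Rightarrow> real) \<Rightarrow> bool" where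
  "pos_def d A \<longleftrightarrow> (\<forall>x :: nat \<Rightarrow> real. (\<exists>i\<in>{1..d}. x i \<noteq> 0) \<longrightarrow>
      (\<Sum>i\<in>{1..d}. \<Sum>j\<in>{1..d}. x i * A i j * x j) > 0)"

definition gaussian_rv :: "'a measure \<Rightarrow> ('a \<Rightarrow> real) \<Rightarrow> bool" where
  "gaussian_rv M X \<longleftrightarrow> X \<in> borel_measurable M \<and>
     ((\<exists>\<mu> \<sigma>. \<sigma> > 0 \<and> distributed M lborel X (normal_density \<mu> \<sigma>)) \<or>
      (\<exists>c. AE \<omega> in M. X \<omega> = c))"

definition gaussian_vector :: "'a measure \<Rightarrow> nat set \<Rightarrow> (nat \<Rightarrow> 'a \<Rightarrow> real) \<Rightarrow> bool" where
  "gaussian_vector M I X \<longleftrightarrow> (\<forall>c :: nat \<Rightarrow> real. gaussian_rv M (\<lambda>\<omega>. \<Sum>k\<in>I. c k * X k \<omega>))"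

definition std_brownian :: "'a measure \<Rightarrow> nat \<Rightarrow> (real \<Rightarrow> nat \<Rightarrow> 'a \<Rightarrow> real) \<Rightarrow> bool" where
  "std_brownian M d W \<longleftrightarrow>
     (\<forall>t\<ge>0. \<forall>j\<in>{1..d}. W t j \<in> borel_measurable M) \<and>
     (\<forall>\<omega>\<in>space M. \<forall>j\<in>{1..d}. W 0 j \<omega> = 0 \<and> continuous_on {0..} (\<lambda>t. W t j \<omega>)) \<and>
     (\<forall>(ts :: nat \<Rightarrow> real) K. 0 \<le> ts 0 \<and> (\<forall>k<K. ts k < ts (Suc k)) \<longrightarrow>
        prob_space.indep_vars M (\<lambda>_. borel)
          (\<lambda>p \<omega>. W (ts (Suc (fst p))) (snd p) \<omega> - W (ts (fst p)) (snd p) \<omega>)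
          ({..<K} \<times> {1..d}) \<and>
        (\<forall>k<K. \<forall>j\<in>{1..d}. distributed M lborel
           (\<lambda>\<omega>. W (ts (Suc k)) j \<omega> - W (ts k) j \<omega>)
           (normal_density 0 (sqrt (ts (Suc k) - ts k)))))"

definition Z_proc :: "real \<Rightarrow> (nat \<Rightarrow> real) \<Rightarrow> (real \<Rightarrow> nat \<Rightarrow> 'a \<Rightarrow> real) \<Rightarrow>
    (real \<Rightarrow> nat \<Rightarrow> 'a \<Rightarrow> real) \<Rightarrow> real \<Rightarrow> nat \<Rightarrow> 'a \<Rightarrow> real" where
  "Z_proc r Tm F S t i \<omega> = ln (F t i \<omega> / S t i \<omega>) - r * (Tm i - t)"

definition phi_coef :: "real \<Rightarrow> nat \<Rightarrow> real \<Rightarrow> real \<Rightarrow> nat \<Rightarrow> real" where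
  "phi_coef T M Ti \<kappa> n =
     (if \<kappa> \<noteq> 1 then
        Ti powr \<kappa> / (\<kappa> - 1) *
          ((Ti - real n * T / real M) powr (1 - \<kappa>) - (Ti - real (n - 1) * T / real M) powr (1 - \<kappa>))
      else Ti * ln ((Ti - real (n - 1) * T / real M) / (Ti - real n * T / real M)))"

end

theory Submission
  imports Defs
begin

text \<open>
  Because \<open>\<eta>S = 0\<close>, the log spot price is a Brownian motion with drift, and the basis \<open>Z\<close> solves
  the linear equation \<open>dZ = (m - \<kappa> Z / (T\<^sub>i - t)) dt + dX\<close>, where \<open>X\<close> is a fixed linear
  combination of the components of \<open>W\<close>. The integrating factor \<open>(T\<^sub>i / (T\<^sub>i - t)) powr \<kappa>\<close> solves
  this equation on every grid interval, leaving as noise Wiener integrals of deterministic \<open>C\<^sup>1\<close>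
  integrands. Defined pathwise by integration by parts, these are limits of Riemann-Stieltjes sums,
  i.e. of linear combinations of independent Gaussian increments of \<open>W\<close>; their characteristic
  functions converge, so by Levy's uniqueness theorem they are centred Gaussian with the variance
  given by the Ito isometry. Covariances follow by polarization, and independence across grid
  intervals from the independence of the increments on disjoint dyadic refinements.
\<close>

section \<open>Uniform grids and Riemann sums\<close>

definition grid :: "real \<Rightarrow> real \<Rightarrow> nat \<Rightarrow> nat \<Rightarrow> real" where
  "grid a b K p = a + real p * (b - a) / real K"

lemma grid_0 [simp]: "grid a b K 0 = a"
  by (simp add: grid_def)

lemma grid_last [simp]: "K > 0 \<Longrightarrow> grid a b K K = b"
  by (simp add: grid_def)

lemma grid_mono: "a \<le> b \<Longrightarrow> p \<le> q \<Longrightarrow> grid a b K p \<le> grid a b K q"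
  unfolding grid_def by (intro add_left_mono divide_right_mono mult_right_mono) auto

lemma grid_Suc_diff: "grid a b K (Suc p) - grid a b K p = (b - a) / real K"
  by (cases "K = 0") (simp_all add: grid_def field_simps)

lemma grid_double: "grid a b (2 * K) (2 * p) = grid a b K p"
  by (cases "K = 0") (simp_all add: grid_def)

lemma grid_double_Suc: "grid a b (2 * K) (Suc (Suc (2 * p))) = grid a b K (Suc p)"
  by (cases "K = 0") (simp_all add: grid_def field_simps)

lemma grid_shift: "K > 0 \<Longrightarrow> grid (real m * h) (real (Suc m) * h) K p = grid 0 h K (K * m + p)"
  by (simp add: grid_def field_simps)

lemma grid_in_interval: "a \<le> b \<Longrightarrow> p \<le> K \<Longrightarrow> K > 0 \<Longrightarrow> grid a b K p \<in> {a..b}"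
  using grid_mono[of a b 0 p K] grid_mono[of a b p K K] by auto

lemma grid_cell_subset:
  "a \<le> b \<Longrightarrow> p < K \<Longrightarrow> {grid a b K p..grid a b K (Suc p)} \<subseteq> {a..b}"
  using grid_in_interval[of a b p K] grid_in_interval[of a b "Suc p" K] by auto

lemma integral_sum_grid:
  fixes f :: "real \<Rightarrow> real"
  assumes ab: "a \<le> b" and K: "K > 0" and f: "f integrable_on {a..b}"
  shows "integral {a..b} f = (\<Sum>p<K. integral {grid a b K p..grid a b K (Suc p)} f)"
proof -
  have "integral {a..grid a b K q} f = (\<Sum>p<q. integral {grid a b K p..grid a b K (Suc p)} f)"
    if "q \<le> K" for q
    using that
  proof (induction q)
    case (Suc q)
    have "grid a b K q \<le> grid a b K (Suc q)" "a \<le> grid a b K q"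
      using grid_mono[OF ab, of q "Suc q" K] grid_mono[OF ab, of 0 q K] by auto
    moreover have "f integrable_on {a..grid a b K (Suc q)}"
      by (rule integrable_on_subinterval[OF f]) (use grid_in_interval[OF ab Suc.prems K] in auto)
    ultimately have "integral {a..grid a b K (Suc q)} f
        = integral {a..grid a b K q} f + integral {grid a b K q..grid a b K (Suc q)} f"
      by (metis Henstock_Kurzweil_Integration.integral_combine)
    with Suc show ?case by simp
  qed simp
  from this[of K] K show ?thesis by simp
qed

lemma weighted_riemann_sum_error:
  fixes u h :: "real \<Rightarrow> real" and \<tau> :: "nat \<Rightarrow> real"
  assumes ab: "a \<le> b" and K: "K > 0"
    and u: "continuous_on {a..b} u" and h: "continuous_on {a..b} h"
    and B: "\<And>x. x \<in> {a..b} \<Longrightarrow> \<bar>u x\<bar> \<le> B"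
    and close: "\<And>p s. p < K \<Longrightarrow> s \<in> {grid a b K p..grid a b K (Suc p)} \<Longrightarrow> \<bar>h (\<tau> p) - h s\<bar> \<le> e"
  shows "\<bar>(\<Sum>p<K. integral {grid a b K p..grid a b K (Suc p)} u * h (\<tau> p))
           - integral {a..b} (\<lambda>s. u s * h s)\<bar> \<le> B * e * (b - a)"
proof -
  let ?g = "grid a b K"
  have cell: "p < K \<Longrightarrow> {?g p..?g (Suc p)} \<subseteq> {a..b}" for p
    using grid_cell_subset[OF ab] .
  have uh: "(\<lambda>s. u s * h s) integrable_on {a..b}"
    by (intro integrable_continuous_real continuous_intros u h)
  have "integral {?g p..?g (Suc p)} u * h (\<tau> p) - integral {?g p..?g (Suc p)} (\<lambda>s. u s * h s)
      = integral {?g p..?g (Suc p)} (\<lambda>s. u s * (h (\<tau> p) - h s))" if p: "p < K" for p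
  proof -
    have "u integrable_on {?g p..?g (Suc p)}" "(\<lambda>s. u s * h s) integrable_on {?g p..?g (Suc p)}"
      using integrable_on_subinterval[OF integrable_continuous_real[OF u] cell[OF p]]
        integrable_on_subinterval[OF uh cell[OF p]] .
    then show ?thesis
      by (simp add: right_diff_distrib integral_diff integrable_on_mult_left)
  qed
  then have diff: "(\<Sum>p<K. integral {?g p..?g (Suc p)} u * h (\<tau> p)) - integral {a..b} (\<lambda>s. u s * h s)
      = (\<Sum>p<K. integral {?g p..?g (Suc p)} (\<lambda>s. u s * (h (\<tau> p) - h s)))"
    by (simp add: integral_sum_grid[OF ab K uh] flip: sum_subtractf)
  have "\<bar>integral {?g p..?g (Suc p)} (\<lambda>s. u s * (h (\<tau> p) - h s))\<bar> \<le> B * e * (?g (Suc p) - ?g p)"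
    if p: "p < K" for p
  proof -
    have "norm (integral {?g p..?g (Suc p)} (\<lambda>s. u s * (h (\<tau> p) - h s))) \<le> (B * e) * (?g (Suc p) - ?g p)"
    proof (rule integral_bound)
      show "?g p \<le> ?g (Suc p)" using grid_mono[OF ab] by simp
      show "continuous_on {?g p..?g (Suc p)} (\<lambda>s. u s * (h (\<tau> p) - h s))"
        by (intro continuous_intros continuous_on_subset[OF u cell[OF p]] continuous_on_subset[OF h cell[OF p]])
      fix s assume s: "s \<in> {?g p..?g (Suc p)}"
      have "\<bar>u s\<bar> * \<bar>h (\<tau> p) - h s\<bar> \<le> B * e"
        using B[of s] close[OF p s] cell[OF p] s by (intro mult_mono) auto
      then show "norm (u s * (h (\<tau> p) - h s)) \<le> B * e" by (simp add: abs_mult)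
    qed
    then show ?thesis by simp
  qed
  then have "\<bar>\<Sum>p<K. integral {?g p..?g (Suc p)} (\<lambda>s. u s * (h (\<tau> p) - h s))\<bar>
      \<le> (\<Sum>p<K. B * e * (?g (Suc p) - ?g p))"
    by (intro order_trans[OF sum_abs] sum_mono) auto
  also have "\<dots> = B * e * (b - a)"
    using K by (simp add: sum_lessThan_telescope flip: sum_distrib_left)
  finally show ?thesis unfolding diff .
qed

lemma weighted_riemann_sum_tendsto:
  fixes u h :: "real \<Rightarrow> real" and \<tau> :: "nat \<Rightarrow> nat \<Rightarrow> real"
  assumes ab: "a < b" and u: "continuous_on {a..b} u" and h: "continuous_on {a..b} h"
    and tau: "\<And>K p. p < K \<Longrightarrow> \<tau> K p \<in> {grid a b K p..grid a b K (Suc p)}"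
  shows "(\<lambda>K. \<Sum>p<K. integral {grid a b K p..grid a b K (Suc p)} u * h (\<tau> K p))
           \<longlonglongrightarrow> integral {a..b} (\<lambda>s. u s * h s)"
proof (rule LIMSEQ_I)
  fix e :: real assume e: "e > 0"
  obtain B where B: "B > 0" "\<And>x. x \<in> {a..b} \<Longrightarrow> \<bar>u x\<bar> \<le> B"
  proof -
    have "bounded (u ` {a..b})" by (intro compact_imp_bounded compact_continuous_image u) auto
    then obtain B0 where "\<forall>x\<in>u ` {a..b}. norm x \<le> B0" by (auto simp: bounded_iff)
    then show ?thesis by (intro that[of "max B0 1"]) (auto intro: max.coboundedI1 order_trans)
  qed
  define e' where "e' = e / (2 * B * (b - a))"
  have e': "e' > 0" using e B ab by (simp add: e'_def)
  have "uniformly_continuous_on {a..b} h" by (rule compact_uniformly_continuous[OF h]) auto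
  then obtain \<delta> where \<delta>: "\<delta> > 0"
    "\<And>x x'. x \<in> {a..b} \<Longrightarrow> x' \<in> {a..b} \<Longrightarrow> dist x' x < \<delta> \<Longrightarrow> dist (h x') (h x) < e'"
    unfolding uniformly_continuous_on_def using e' by metis
  obtain K0 :: nat where K0: "(b - a) / \<delta> < real K0" using reals_Archimedean2 by blast
  have "K0 > 0" using K0 ab \<delta> by (cases K0) (auto simp: field_simps)
  show "\<exists>K0. \<forall>K\<ge>K0. norm ((\<Sum>p<K. integral {grid a b K p..grid a b K (Suc p)} u * h (\<tau> K p))
                             - integral {a..b} (\<lambda>s. u s * h s)) < e"
  proof (intro exI allI impI)
    fix K assume "K0 \<le> K"
    with \<open>K0 > 0\<close> have K: "K > 0" by simp
    have "(b - a) / real K \<le> (b - a) / real K0"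
      using \<open>K0 \<le> K\<close> \<open>K0 > 0\<close> ab by (intro divide_left_mono) auto
    also have "\<dots> < \<delta>" using K0 \<delta> \<open>K0 > 0\<close> by (simp add: field_simps)
    finally have mesh: "(b - a) / real K < \<delta>" .
    have "\<bar>h (\<tau> K p) - h s\<bar> \<le> e'"
      if p: "p < K" and s: "s \<in> {grid a b K p..grid a b K (Suc p)}" for p s
    proof -
      have "dist (\<tau> K p) s \<le> grid a b K (Suc p) - grid a b K p"
        using s tau[OF p] by (auto simp: dist_real_def)
      then have "dist (\<tau> K p) s < \<delta>" using mesh grid_Suc_diff[of a b K p] by simp
      then show ?thesis
        using \<delta>(2)[of s "\<tau> K p"] grid_cell_subset[of a b p K] ab p s tau[OF p]
        by (auto simp: dist_real_def)
    qed
    then have "\<bar>(\<Sum>p<K. integral {grid a b K p..grid a b K (Suc p)} u * h (\<tau> K p))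
                - integral {a..b} (\<lambda>s. u s * h s)\<bar> \<le> B * e' * (b - a)"
      using ab by (intro weighted_riemann_sum_error[OF _ K u h B(2)]) auto
    also have "B * e' * (b - a) < e" using B ab e by (simp add: e'_def field_simps)
    finally show "norm ((\<Sum>p<K. integral {grid a b K p..grid a b K (Suc p)} u * h (\<tau> K p))
                  - integral {a..b} (\<lambda>s. u s * h s)) < e" by simp
  qed
qed

section \<open>Pathwise Wiener integrals\<close>

definition C1_on :: "real \<Rightarrow> real \<Rightarrow> (real \<Rightarrow> real) \<Rightarrow> (real \<Rightarrow> real) \<Rightarrow> bool" where
  "C1_on a b f f' \<longleftrightarrow>
     (\<forall>x\<in>{a..b}. (f has_real_derivative f' x) (at x within {a..b})) \<and> continuous_on {a..b} f'"

lemma C1_on_imp_continuous_on: "C1_on a b f f' \<Longrightarrow> continuous_on {a..b} f"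
  unfolding C1_on_def by (meson DERIV_continuous continuous_on_eq_continuous_within)

lemma C1_on_deriv_continuous_on: "C1_on a b f f' \<Longrightarrow> continuous_on {a..b} f'"
  unfolding C1_on_def by simp

lemma C1_on_const: "C1_on a b (\<lambda>_. c) (\<lambda>_. 0)"
  unfolding C1_on_def by auto

lemma C1_on_cmult: "C1_on a b f f' \<Longrightarrow> C1_on a b (\<lambda>s. c * f s) (\<lambda>s. c * f' s)"
  unfolding C1_on_def by (auto intro!: DERIV_cmult continuous_intros)

lemma C1_on_add: "C1_on a b f f' \<Longrightarrow> C1_on a b g g' \<Longrightarrow> C1_on a b (\<lambda>s. f s + g s) (\<lambda>s. f' s + g' s)"
  unfolding C1_on_def by (auto intro!: DERIV_add continuous_intros)

lemma C1_on_lincomb: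
  "finite J \<Longrightarrow> (\<And>j. j \<in> J \<Longrightarrow> C1_on a b (f j) (f' j)) \<Longrightarrow>
     C1_on a b (\<lambda>s. \<Sum>j\<in>J. c j * f j s) (\<lambda>s. \<Sum>j\<in>J. c j * f' j s)"
  unfolding C1_on_def by (auto intro!: DERIV_sum DERIV_cmult continuous_intros)

lemma integral_C1_on_deriv:
  assumes "C1_on a b f f'" "a \<le> c" "c \<le> e" "e \<le> b"
  shows "integral {c..e} f' = f e - f c"
proof -
  have "(f' has_integral (f e - f c)) {c..e}"
  proof (rule fundamental_theorem_of_calculus[OF assms(3)])
    fix x assume "x \<in> {c..e}"
    then have "(f has_real_derivative f' x) (at x within {a..b})"
      using assms unfolding C1_on_def by auto
    then have "(f has_real_derivative f' x) (at x within {c..e})"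
      by (rule has_field_derivative_subset) (use assms in auto)
    then show "(f has_vector_derivative f' x) (at x within {c..e})"
      by (simp add: has_real_derivative_iff_has_vector_derivative)
  qed
  then show ?thesis by (rule integral_unique)
qed

text \<open>For a deterministic \<open>C\<^sup>1\<close> integrand, the stochastic integral \<open>\<integral>\<^sub>a\<^sup>b f dW\<^sub>k\<close> is defined pathwise
  through integration by parts; this avoids Ito integration altogether.\<close>

definition wiener_component ::
    "(real \<Rightarrow> nat \<Rightarrow> 'a \<Rightarrow> real) \<Rightarrow> real \<Rightarrow> real \<Rightarrow> (real \<Rightarrow> real) \<Rightarrow> (real \<Rightarrow> real) \<Rightarrow> nat \<Rightarrow> 'a \<Rightarrow> real"
  where "wiener_component W a b f f' k \<omega> =
    f b * (W b k \<omega> - W a k \<omega>) - integral {a..b} (\<lambda>s. f' s * (W s k \<omega> - W a k \<omega>))"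

definition wiener_integral ::
    "(real \<Rightarrow> nat \<Rightarrow> 'a \<Rightarrow> real) \<Rightarrow> nat \<Rightarrow> real \<Rightarrow> real \<Rightarrow> (nat \<Rightarrow> real \<Rightarrow> real) \<Rightarrow>
      (nat \<Rightarrow> real \<Rightarrow> real) \<Rightarrow> 'a \<Rightarrow> real"
  where "wiener_integral W d a b F F' \<omega> = (\<Sum>k\<in>{1..d}. wiener_component W a b (F k) (F' k) k \<omega>)"

definition riemann_stieltjes_sum ::
    "(real \<Rightarrow> nat \<Rightarrow> 'a \<Rightarrow> real) \<Rightarrow> nat \<Rightarrow> real \<Rightarrow> real \<Rightarrow> (nat \<Rightarrow> real \<Rightarrow> real) \<Rightarrow> nat \<Rightarrow> 'a \<Rightarrow> real"
  where "riemann_stieltjes_sum W d a b F K \<omega> =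
    (\<Sum>k\<in>{1..d}. \<Sum>p<K. F k (grid a b K p) * (W (grid a b K (Suc p)) k \<omega> - W (grid a b K p) k \<omega>))"

lemma sum_by_parts:
  fixes f D :: "nat \<Rightarrow> real"
  assumes "D 0 = 0"
  shows "(\<Sum>p<q. f p * (D (Suc p) - D p)) = f q * D q - (\<Sum>p<q. (f (Suc p) - f p) * D (Suc p))"
  using assms by (induction q) (simp_all add: algebra_simps)

lemma riemann_stieltjes_tendsto_by_parts:
  fixes w :: "real \<Rightarrow> real"
  assumes ab: "a < b" and f: "C1_on a b f f'" and w: "continuous_on {a..b} w"
  shows "(\<lambda>K. \<Sum>p<K. f (grid a b K p) * (w (grid a b K (Suc p)) - w (grid a b K p)))
     \<longlonglongrightarrow> f b * (w b - w a) - integral {a..b} (\<lambda>s. f' s * (w s - w a))"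
proof -
  let ?X = "\<lambda>K. f b * (w b - w a)
    - (\<Sum>p<K. integral {grid a b K p..grid a b K (Suc p)} f' * (w (grid a b K (Suc p)) - w a))"
  have "?X \<longlonglongrightarrow> f b * (w b - w a) - integral {a..b} (\<lambda>s. f' s * (w s - w a))"
    using f w ab
    by (intro tendsto_diff tendsto_const weighted_riemann_sum_tendsto)
      (auto simp: C1_on_def intro!: continuous_intros grid_mono)
  moreover have "?X K = (\<Sum>p<K. f (grid a b K p) * (w (grid a b K (Suc p)) - w (grid a b K p)))"
    if K: "K \<ge> 1" for K
  proof -
    let ?g = "grid a b K"
    have "integral {?g p..?g (Suc p)} f' = f (?g (Suc p)) - f (?g p)" if "p < K" for p
      using grid_in_interval[of a b p K] grid_in_interval[of a b "Suc p" K] grid_mono[of a b p "Suc p" K]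
        ab K that by (intro integral_C1_on_deriv[OF f]) auto
    then show ?thesis
      using sum_by_parts[of "\<lambda>p. w (?g p) - w a" "\<lambda>p. f (?g p)" K] K by simp
  qed
  ultimately show ?thesis
    by (rule Lim_transform_eventually[OF _ eventually_sequentiallyI])
qed

lemma riemann_stieltjes_sum_tendsto:
  assumes ab: "a < b" and F: "\<And>k. k \<in> {1..d} \<Longrightarrow> C1_on a b (F k) (F' k)"
    and W: "\<And>k. k \<in> {1..d} \<Longrightarrow> continuous_on {a..b} (\<lambda>s. W s k \<omega>)"
  shows "(\<lambda>K. riemann_stieltjes_sum W d a b F K \<omega>) \<longlonglongrightarrow> wiener_integral W d a b F F' \<omega>"
  unfolding riemann_stieltjes_sum_def wiener_integral_def wiener_component_def
  by (intro tendsto_sum riemann_stieltjes_tendsto_by_parts[OF ab] F W)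

lemma wiener_integral_lincomb:
  assumes J: "finite J" and F': "\<And>j k. j \<in> J \<Longrightarrow> k \<in> {1..d} \<Longrightarrow> continuous_on {a..b} (F' j k)"
    and W: "\<And>k. k \<in> {1..d} \<Longrightarrow> continuous_on {a..b} (\<lambda>s. W s k \<omega>)"
  shows "wiener_integral W d a b (\<lambda>k s. \<Sum>j\<in>J. c j * F j k s) (\<lambda>k s. \<Sum>j\<in>J. c j * F' j k s) \<omega>
       = (\<Sum>j\<in>J. c j * wiener_integral W d a b (F j) (F' j) \<omega>)"
proof -
  have "integral {a..b} (\<lambda>s. (\<Sum>j\<in>J. c j * F' j k s) * (W s k \<omega> - W a k \<omega>))
      = (\<Sum>j\<in>J. c j * integral {a..b} (\<lambda>s. F' j k s * (W s k \<omega> - W a k \<omega>)))"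
    if k: "k \<in> {1..d}" for k
  proof -
    have "integral {a..b} (\<lambda>s. (\<Sum>j\<in>J. c j * F' j k s) * (W s k \<omega> - W a k \<omega>))
        = integral {a..b} (\<lambda>s. \<Sum>j\<in>J. c j * (F' j k s * (W s k \<omega> - W a k \<omega>)))"
      by (rule integral_cong) (simp add: sum_distrib_left sum_distrib_right mult_ac)
    also have "\<dots> = (\<Sum>j\<in>J. integral {a..b} (\<lambda>s. c j * (F' j k s * (W s k \<omega> - W a k \<omega>))))"
      using F' W k by (intro integral_sum J integrable_continuous_real continuous_intros) auto
    finally show ?thesis by simp
  qed
  then show ?thesis
    unfolding wiener_integral_def wiener_component_def
    by (simp add: sum_subtractf sum_distrib_left sum_distrib_right right_diff_distrib mult_ac
        sum.swap[of _ J])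
qed

lemma wiener_integral_add:
  assumes F': "\<And>k. k \<in> {1..d} \<Longrightarrow> continuous_on {a..b} (F' k)"
    and G': "\<And>k. k \<in> {1..d} \<Longrightarrow> continuous_on {a..b} (G' k)"
    and W: "\<And>k. k \<in> {1..d} \<Longrightarrow> continuous_on {a..b} (\<lambda>s. W s k \<omega>)"
  shows "wiener_integral W d a b (\<lambda>k s. F k s + G k s) (\<lambda>k s. F' k s + G' k s) \<omega>
       = wiener_integral W d a b F F' \<omega> + wiener_integral W d a b G G' \<omega>"
proof -
  have "integral {a..b} (\<lambda>s. (F' k s + G' k s) * (W s k \<omega> - W a k \<omega>))
      = integral {a..b} (\<lambda>s. F' k s * (W s k \<omega> - W a k \<omega>))
        + integral {a..b} (\<lambda>s. G' k s * (W s k \<omega> - W a k \<omega>))" if k: "k \<in> {1..d}" for k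
    using F'[OF k] G'[OF k] W[OF k]
    by (simp add: distrib_right integral_add integrable_continuous_real continuous_intros)
  then show ?thesis
    unfolding wiener_integral_def sum.distrib[symmetric]
    by (intro sum.cong refl) (simp add: wiener_component_def algebra_simps)
qed

lemma wiener_integral_separable:
  fixes c :: "nat \<Rightarrow> real"
  assumes g: "C1_on a b g g'" and ab: "a \<le> b"
    and W: "\<And>k. k \<in> {1..d} \<Longrightarrow> continuous_on {a..b} (\<lambda>s. W s k \<omega>)"
  defines "X \<equiv> \<lambda>s. \<Sum>k\<in>{1..d}. c k * W s k \<omega>"
  shows "wiener_integral W d a b (\<lambda>k s. c k * g s) (\<lambda>k s. c k * g' s) \<omega>
       = g b * X b - g a * X a - integral {a..b} (\<lambda>s. g' s * X s)"
proof -
  have g': "continuous_on {a..b} g'" by (rule C1_on_deriv_continuous_on[OF g])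
  have X: "continuous_on {a..b} X" unfolding X_def by (intro continuous_intros W)
  have "(\<Sum>k\<in>{1..d}. integral {a..b} (\<lambda>s. c k * g' s * (W s k \<omega> - W a k \<omega>)))
      = integral {a..b} (\<lambda>s. \<Sum>k\<in>{1..d}. c k * g' s * (W s k \<omega> - W a k \<omega>))"
    by (rule integral_sum[symmetric]) (auto intro!: integrable_continuous_real continuous_intros g' W)
  also have "\<dots> = integral {a..b} (\<lambda>s. g' s * X s - X a * g' s)"
    unfolding X_def by (simp add: sum_distrib_left sum_distrib_right sum_subtractf algebra_simps)
  also have "\<dots> = integral {a..b} (\<lambda>s. g' s * X s) - X a * (g b - g a)"
    using integral_C1_on_deriv[OF g order_refl ab order_refl]
    by (subst integral_diff) (auto intro!: integrable_continuous_real continuous_intros g' X)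
  finally have "(\<Sum>k\<in>{1..d}. integral {a..b} (\<lambda>s. c k * g' s * (W s k \<omega> - W a k \<omega>)))
      = integral {a..b} (\<lambda>s. g' s * X s) - X a * (g b - g a)" .
  moreover have "(\<Sum>k\<in>{1..d}. c k * g b * (W b k \<omega> - W a k \<omega>)) = g b * (X b - X a)"
    unfolding X_def by (simp add: sum_distrib_left sum_subtractf algebra_simps)
  moreover have "wiener_integral W d a b (\<lambda>k s. c k * g s) (\<lambda>k s. c k * g' s) \<omega>
      = (\<Sum>k\<in>{1..d}. c k * g b * (W b k \<omega> - W a k \<omega>))
        - (\<Sum>k\<in>{1..d}. integral {a..b} (\<lambda>s. c k * g' s * (W s k \<omega> - W a k \<omega>)))"
    unfolding wiener_integral_def wiener_component_def by (simp add: sum_subtractf mult.assoc)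
  ultimately show ?thesis by (simp add: algebra_simps)
qed

section \<open>The integrating factor\<close>

lemma integrating_factor_has_derivative:
  fixes Tm \<kappa> s :: real
  assumes Tm: "0 < Tm" and s: "s < Tm"
  shows "((\<lambda>s. (Tm / (Tm - s)) powr \<kappa>) has_real_derivative \<kappa> * (Tm / (Tm - s)) powr \<kappa> / (Tm - s)) (at s)"
proof -
  have pos: "Tm / (Tm - s) > 0" using Tm s by simp
  have "((\<lambda>s. Tm / (Tm - s)) has_real_derivative Tm / (Tm - s)^2) (at s)"
    using s by (auto intro!: derivative_eq_intros simp: power2_eq_square field_simps)
  from DERIV_chain2[OF has_real_derivative_powr[OF pos] this]
  have "((\<lambda>s. (Tm / (Tm - s)) powr \<kappa>) has_real_derivative
          \<kappa> * (Tm / (Tm - s)) powr (\<kappa> - 1) * (Tm / (Tm - s)^2)) (at s)" .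
  moreover have "(Tm / (Tm - s)) powr (\<kappa> - 1) = (Tm / (Tm - s)) powr \<kappa> / (Tm / (Tm - s))"
    using pos Tm s by (simp add: powr_diff abs_of_pos)
  then have "\<kappa> * (Tm / (Tm - s)) powr (\<kappa> - 1) * (Tm / (Tm - s)^2) = \<kappa> * (Tm / (Tm - s)) powr \<kappa> / (Tm - s)"
    using s by (simp add: power2_eq_square)
  ultimately show ?thesis by (rule DERIV_cong)
qed

lemma C1_on_integrating_factor:
  fixes Tm \<kappa> a b :: real
  assumes Tm: "0 < Tm" and b: "b < Tm"
  shows "C1_on a b (\<lambda>s. (Tm / (Tm - s)) powr \<kappa>) (\<lambda>s. \<kappa> * (Tm / (Tm - s)) powr \<kappa> / (Tm - s))"
  unfolding C1_on_def
proof (intro conjI ballI)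
  fix x assume "x \<in> {a..b}"
  then have "x < Tm" using b by auto
  then show "((\<lambda>s. (Tm / (Tm - s)) powr \<kappa>) has_real_derivative
      \<kappa> * (Tm / (Tm - x)) powr \<kappa> / (Tm - x)) (at x within {a..b})"
    by (rule has_field_derivative_at_within[OF integrating_factor_has_derivative[OF Tm]])
next
  have "isCont (\<lambda>s. \<kappa> * (Tm / (Tm - s)) powr \<kappa> / (Tm - s)) x" if "x < Tm" for x
    using that Tm DERIV_isCont[OF integrating_factor_has_derivative[OF Tm that]]
    by (intro continuous_intros) auto
  then show "continuous_on {a..b} (\<lambda>s. \<kappa> * (Tm / (Tm - s)) powr \<kappa> / (Tm - s))"
    using b by (intro continuous_at_imp_continuous_on) auto
qed

lemma integral_integrating_factor:
  fixes Tm \<kappa> a b :: real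
  assumes Tm: "0 < Tm" and ab: "a \<le> b" and b: "b < Tm"
  shows "integral {a..b} (\<lambda>s. (Tm / (Tm - s)) powr \<kappa>) =
    (if \<kappa> \<noteq> 1 then Tm powr \<kappa> / (\<kappa> - 1) * ((Tm - b) powr (1 - \<kappa>) - (Tm - a) powr (1 - \<kappa>))
     else Tm * ln ((Tm - a) / (Tm - b)))"
proof -
  define G where "G = (\<lambda>s. if \<kappa> \<noteq> 1 then Tm powr \<kappa> / (\<kappa> - 1) * (Tm - s) powr (1 - \<kappa>)
                          else - Tm * ln (Tm - s))"
  have "(G has_real_derivative (Tm / (Tm - x)) powr \<kappa>) (at x)" if x: "x < Tm" for x
  proof (cases "\<kappa> = 1")
    case True
    then show ?thesis unfolding G_def
      using x Tm by (auto intro!: derivative_eq_intros simp: field_simps)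
  next
    case False
    have "(G has_real_derivative Tm powr \<kappa> / (\<kappa> - 1) * ((1 - \<kappa>) * (Tm - x) powr (1 - \<kappa> - 1) * (-1)))
        (at x)"
      unfolding G_def using x False by (auto intro!: derivative_eq_intros)
    moreover have "(Tm - x) powr (1 - \<kappa> - 1) = inverse ((Tm - x) powr \<kappa>)"
      using powr_minus[of "Tm - x" \<kappa>] by simp
    moreover have "(Tm / (Tm - x)) powr \<kappa> = Tm powr \<kappa> / (Tm - x) powr \<kappa>"
      using x Tm by (simp add: powr_divide)
    moreover have "Tm powr \<kappa> / (\<kappa> - 1) * ((1 - \<kappa>) * inverse B * (-1)) = Tm powr \<kappa> / B"
      if "B > 0" for B :: real
      using False that by (simp add: field_simps)
    ultimately show ?thesis using x by simp
  qed
  then have "((\<lambda>s. (Tm / (Tm - s)) powr \<kappa>) has_integral (G b - G a)) {a..b}"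
    using ab b
    by (intro fundamental_theorem_of_calculus)
      (auto simp: has_real_derivative_iff_has_vector_derivative[symmetric] intro: has_field_derivative_at_within)
  moreover have "G b - G a = (if \<kappa> \<noteq> 1 then Tm powr \<kappa> / (\<kappa> - 1) * ((Tm - b) powr (1 - \<kappa>) - (Tm - a) powr (1 - \<kappa>))
                              else Tm * ln ((Tm - a) / (Tm - b)))"
    using ab b by (simp add: G_def ln_div right_diff_distrib algebra_simps)
  ultimately show ?thesis by (simp add: integral_unique)
qed

lemma integral_equation_has_derivative:
  fixes Z X h :: "real \<Rightarrow> real"
  assumes h: "continuous_on {0..T} h"
    and Z: "\<And>t. t \<in> {0..T} \<Longrightarrow> Z t = C + integral {0..t} h + X t"
    and x: "x \<in> {0..T}"
  shows "((\<lambda>t. Z t - X t) has_real_derivative h x) (at x within {0..T})"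
proof -
  have "((\<lambda>t. C + integral {0..t} h) has_vector_derivative 0 + h x) (at x within {0..T})"
    by (intro has_vector_derivative_add has_vector_derivative_const integral_has_vector_derivative h x)
  then have "((\<lambda>t. C + integral {0..t} h) has_real_derivative h x) (at x within {0..T})"
    by (simp add: has_real_derivative_iff_has_vector_derivative)
  then show ?thesis
    by (rule has_field_derivative_transform_within[OF _ zero_less_one x]) (simp add: Z)
qed

text \<open>Variation of constants for \<open>dZ = (m\<^sub>0 - \<kappa> Z / (T\<^sub>m - s)) ds + dX\<close>: the factor
  \<open>(T\<^sub>m / (T\<^sub>m - s)) powr \<kappa>\<close> removes the linear drift, and the remaining \<open>dX\<close>-term is again
  written through integration by parts.\<close>

lemma integrating_factor_step:
  fixes Z X :: "real \<Rightarrow> real" and Tm \<kappa> m\<^sub>0 C T a b :: real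
  assumes Tm: "0 < Tm" "T < Tm" and ab: "0 \<le> a" "a \<le> b" "b \<le> T"
    and Z: "continuous_on {0..T} Z" and X: "continuous_on {0..T} X"
    and Z_eq: "\<And>t. t \<in> {0..T} \<Longrightarrow> Z t = C + integral {0..t} (\<lambda>s. m\<^sub>0 - \<kappa> / (Tm - s) * Z s) + X t"
  shows "(Tm / (Tm - b)) powr \<kappa> * Z b = (Tm / (Tm - a)) powr \<kappa> * Z a
      + integral {a..b} (\<lambda>s. (Tm / (Tm - s)) powr \<kappa>) * m\<^sub>0
      + ((Tm / (Tm - b)) powr \<kappa> * X b - (Tm / (Tm - a)) powr \<kappa> * X a
         - integral {a..b} (\<lambda>s. \<kappa> * (Tm / (Tm - s)) powr \<kappa> / (Tm - s) * X s))"
proof -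
  define g where "g = (\<lambda>s. (Tm / (Tm - s)) powr \<kappa>)"
  define g' where "g' = (\<lambda>s. \<kappa> * (Tm / (Tm - s)) powr \<kappa> / (Tm - s))"
  have g: "C1_on 0 T g g'" unfolding g_def g'_def by (rule C1_on_integrating_factor) (use Tm in auto)
  have "((\<lambda>t. g t * (Z t - X t)) has_vector_derivative g x * m\<^sub>0 - g' x * X x) (at x within {a..b})"
    if x: "x \<in> {a..b}" for x
  proof -
    have x0: "x \<in> {0..T}" using x ab by auto
    have "((\<lambda>t. Z t - X t) has_real_derivative m\<^sub>0 - \<kappa> / (Tm - x) * Z x) (at x within {0..T})"
      using Tm by (intro integral_equation_has_derivative[OF _ Z_eq x0] continuous_intros Z) auto
    moreover have "(g has_real_derivative g' x) (at x within {0..T})"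
      using g x0 unfolding C1_on_def by auto
    ultimately have "((\<lambda>t. g t * (Z t - X t)) has_real_derivative g x * m\<^sub>0 - g' x * X x) (at x within {0..T})"
      by (rule DERIV_mult'[rotated, THEN DERIV_cong])
        (simp add: g_def g'_def divide_inverse algebra_simps)
    then show ?thesis
      using ab by (auto simp: has_real_derivative_iff_has_vector_derivative[symmetric]
          intro: has_field_derivative_subset)
  qed
  from fundamental_theorem_of_calculus[OF ab(2) this]
  have "g b * (Z b - X b) - g a * (Z a - X a) = integral {a..b} (\<lambda>x. g x * m\<^sub>0 - g' x * X x)"
    by (simp add: integral_unique)
  also have "\<dots> = integral {a..b} g * m\<^sub>0 - integral {a..b} (\<lambda>x. g' x * X x)"
  proof -
    have "C1_on a b g g'" unfolding g_def g'_def by (rule C1_on_integrating_factor) (use Tm ab in auto)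
    then have "continuous_on {a..b} g" "continuous_on {a..b} g'"
      by (rule C1_on_imp_continuous_on, rule C1_on_deriv_continuous_on)
    moreover have "continuous_on {a..b} X" by (rule continuous_on_subset[OF X]) (use ab in auto)
    ultimately show ?thesis
      by (subst integral_diff) (auto intro!: integrable_continuous_real continuous_intros)
  qed
  finally show ?thesis by (simp add: g_def g'_def algebra_simps)
qed

section \<open>Centred Gaussian variables and characteristic functions\<close>

lemma (in prob_space) char_distr:
  assumes "X \<in> borel_measurable M"
  shows "char (distr M borel X) t = (CLINT \<omega>|M. iexp (t * X \<omega>))"
  unfolding char_def by (rule integral_distr[OF assms]) measurable

lemma (in prob_space) char_normal_distributed:
  assumes X: "distributed M lborel X (normal_density 0 \<sigma>)" and \<sigma>: "\<sigma> > 0"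
  shows "(CLINT \<omega>|M. iexp (t * X \<omega>)) = complex_of_real (exp (- ((\<sigma> * t)^2) / 2))"
proof -
  have "distributed M lborel (\<lambda>x. (X x - 0) / \<sigma>) std_normal_density"
    using normal_standard_normal_convert[OF \<sigma>, of X 0] X by simp
  then have Y: "(\<lambda>x. X x / \<sigma>) \<in> measurable M lborel"
    and Y_distr: "distr M lborel (\<lambda>x. X x / \<sigma>) = std_normal_distribution"
    by (auto simp: distributed_def)
  have "(CLINT \<omega>|M. iexp (t * X \<omega>)) = (CLINT \<omega>|M. iexp ((t * \<sigma>) * (X \<omega> / \<sigma>)))"
    using \<sigma> by simp
  also have "\<dots> = (CLINT y|distr M lborel (\<lambda>x. X x / \<sigma>). iexp ((t * \<sigma>) * y))"
    by (rule integral_distr[symmetric, OF Y]) simp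
  also have "\<dots> = char std_normal_distribution (t * \<sigma>)"
    unfolding Y_distr char_def ..
  also have "\<dots> = complex_of_real (exp (- ((\<sigma> * t)^2) / 2))"
    by (simp add: char_std_normal_distribution mult.commute)
  finally show ?thesis .
qed

lemma (in prob_space) normal_distributed_of_char:
  assumes X: "X \<in> borel_measurable M" and \<sigma>: "\<sigma> > 0"
    and char_X: "\<And>t. (CLINT \<omega>|M. iexp (t * X \<omega>)) = complex_of_real (exp (- ((\<sigma> * t)^2) / 2))"
  shows "distributed M lborel X (normal_density 0 \<sigma>)"
proof -
  define \<nu> where "\<nu> = density lborel (normal_density 0 \<sigma>)"
  have \<nu>: "prob_space \<nu>" unfolding \<nu>_def using prob_space_normal_density[OF \<sigma>] by simp
  then have "real_distribution \<nu>"
    by (simp add: real_distribution_def real_distribution_axioms_def \<nu>_def)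
  moreover have "distributed \<nu> lborel (\<lambda>x. x) (normal_density 0 \<sigma>)"
    unfolding distributed_def by (simp add: distr_id2 \<nu>_def)
  then have "char \<nu> t = complex_of_real (exp (- ((\<sigma> * t)^2) / 2))" for t
    using prob_space.char_normal_distributed[OF \<nu> _ \<sigma>] unfolding char_def by simp
  then have "char (distr M borel X) = char \<nu>"
    by (intro ext) (simp only: char_distr[OF X] char_X)
  ultimately have "distr M borel X = \<nu>"
    using X by (intro Levy_uniqueness) simp_all
  moreover have "distr M lborel X = distr M borel X" by (rule distr_cong) auto
  ultimately show ?thesis
    unfolding distributed_def using X by (simp add: \<nu>_def)
qed

lemma (in prob_space) AE_zero_of_char_one:
  assumes X: "X \<in> borel_measurable M" and char_X: "\<And>t. (CLINT \<omega>|M. iexp (t * X \<omega>)) = 1"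
  shows "AE \<omega> in M. X \<omega> = 0"
proof -
  define \<nu> where "\<nu> = return borel (0::real)"
  have "prob_space \<nu>" unfolding \<nu>_def by (rule prob_space_return) simp
  then have "real_distribution \<nu>"
    by (simp add: real_distribution_def real_distribution_axioms_def \<nu>_def)
  moreover have "char \<nu> t = 1" for t
    unfolding char_def \<nu>_def by (subst integral_return) auto
  then have "char (distr M borel X) = char \<nu>"
    by (intro ext) (simp only: char_distr[OF X] char_X)
  ultimately have "distr M borel X = \<nu>"
    using X by (intro Levy_uniqueness) simp_all
  moreover have "AE x in \<nu>. x = 0" unfolding \<nu>_def by (subst AE_return) auto
  ultimately have "AE x in distr M borel X. x = 0" by metis
  then show ?thesis by (rule AE_distrD[OF X])
qed

lemma (in prob_space) centered_gaussian_of_char: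
  fixes X :: "'a \<Rightarrow> real"
  assumes X: "X \<in> borel_measurable M" and v: "v \<ge> 0"
    and char_X: "\<And>t. (CLINT \<omega>|M. iexp (t * X \<omega>)) = complex_of_real (exp (- (t^2 * v) / 2))"
  shows "gaussian_rv M X \<and> integrable M X \<and> integral\<^sup>L M X = 0
       \<and> integrable M (\<lambda>\<omega>. X \<omega>^2) \<and> integral\<^sup>L M (\<lambda>\<omega>. X \<omega>^2) = v"
proof (cases "v > 0")
  case True
  define \<sigma> where "\<sigma> = sqrt v"
  have \<sigma>: "\<sigma> > 0" "\<sigma>^2 = v" using True by (simp_all add: \<sigma>_def)
  have "(CLINT \<omega>|M. iexp (t * X \<omega>)) = complex_of_real (exp (- ((\<sigma> * t)^2) / 2))" for t
    using char_X[of t] \<sigma> by (simp add: power_mult_distrib mult.commute)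
  then have D: "distributed M lborel X (normal_density 0 \<sigma>)"
    by (rule normal_distributed_of_char[OF X \<sigma>(1)])
  have "integrable M X"
    using distributed_integrable[OF D, of "\<lambda>x. x"] integrable_normal_moment_nz_1[OF \<sigma>(1), of 0] by simp
  moreover have "integrable M (\<lambda>\<omega>. X \<omega>^2)"
    using distributed_integrable[OF D, of "\<lambda>x. x^2"] integrable_normal_moment[OF \<sigma>(1), of 0 2] by simp
  moreover have "gaussian_rv M X" unfolding gaussian_rv_def using X \<sigma> D by blast
  ultimately show ?thesis
    using normal_distributed_expectation[OF \<sigma>(1) D] normal_distributed_variance[OF \<sigma>(1) D] \<sigma>(2)
    by simp
next
  case False
  with v have "v = 0" by simp
  then have AE: "AE \<omega> in M. X \<omega> = 0"
    using char_X by (intro AE_zero_of_char_one X) simp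
  have X2: "(\<lambda>\<omega>. X \<omega>^2) \<in> borel_measurable M" using X by measurable
  have AE2: "AE \<omega> in M. X \<omega>^2 = 0" using AE by eventually_elim simp
  have "gaussian_rv M X" unfolding gaussian_rv_def using X AE by blast
  then show ?thesis
    using \<open>v = 0\<close> integrable_cong_AE[OF X _ AE] integral_cong_AE[OF X _ AE]
      integrable_cong_AE[OF X2 _ AE2] integral_cong_AE[OF X2 _ AE2]
    by simp
qed

lemma gaussian_rv_cong:
  assumes eq: "\<And>\<omega>. \<omega> \<in> space M \<Longrightarrow> X \<omega> = Y \<omega>" and X: "gaussian_rv M X"
  shows "gaussian_rv M Y"
proof -
  have "Y \<in> borel_measurable M" using X eq measurable_cong[of M X Y] unfolding gaussian_rv_def by simp
  moreover have "distr M lborel X = distr M lborel Y" by (rule distr_cong) (use eq in auto)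
  then have "distributed M lborel X f \<longleftrightarrow> distributed M lborel Y f" for f
    using X \<open>Y \<in> borel_measurable M\<close> unfolding distributed_def gaussian_rv_def by auto
  moreover have "(AE \<omega> in M. X \<omega> = c) \<longleftrightarrow> (AE \<omega> in M. Y \<omega> = c)" for c
    using eq by (intro AE_cong) auto
  ultimately show ?thesis using X unfolding gaussian_rv_def by simp
qed

lemma (in prob_space) indep_sets_sigma_Union_incseq:
  assumes indep: "\<And>k. indep_sets (F k) I"
    and mono: "\<And>k n. n \<in> I \<Longrightarrow> F k n \<subseteq> F (Suc k) n"
    and stable: "\<And>k n. n \<in> I \<Longrightarrow> Int_stable (F k n)"
  shows "indep_sets (\<lambda>n. sigma_sets (space M) (\<Union>k. F k n)) I"
proof (rule indep_sets_sigma)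
  have mono': "F i n \<subseteq> F j n" if "i \<le> j" "n \<in> I" for i j n
    using lift_Suc_mono_le[of "\<lambda>k. F k n", OF _ that(1)] mono[OF that(2)] by simp
  show "indep_sets (\<lambda>n. \<Union>k. F k n) I"
  proof (rule indep_setsI)
    show "(\<Union>k. F k n) \<subseteq> events" if "n \<in> I" for n
      using indep that by (auto simp: indep_sets_def)
    fix A L assume L: "L \<noteq> {}" "L \<subseteq> I" "finite L" and A: "\<forall>n\<in>L. A n \<in> (\<Union>k. F k n)"
    then have "\<forall>n\<in>L. \<exists>k. A n \<in> F k n" by blast
    then obtain k where k: "\<And>n. n \<in> L \<Longrightarrow> A n \<in> F (k n) n" by metis
    have "A n \<in> F (Max (k ` L)) n" if "n \<in> L" for n
      using mono'[of "k n" "Max (k ` L)" n] k[OF that] L that by auto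
    then show "prob (\<Inter>n\<in>L. A n) = (\<Prod>n\<in>L. prob (A n))"
      by (intro indep_setsD[OF indep L(2,1,3)]) auto
  qed
  show "Int_stable (\<Union>k. F k n)" if n: "n \<in> I" for n
  proof (rule Int_stableI)
    fix A B assume "A \<in> (\<Union>k. F k n)" "B \<in> (\<Union>k. F k n)"
    then obtain i j where "A \<in> F i n" "B \<in> F j n" by auto
    then have "A \<in> F (max i j) n" "B \<in> F (max i j) n"
      using mono'[OF _ n] by (meson max.cobounded1 max.cobounded2 subsetD)+
    then show "A \<inter> B \<in> (\<Union>k. F k n)" using stable[OF n] by (auto simp: Int_stable_def)
  qed
qed

section \<open>Wiener integrals against Brownian motion\<close>

locale brownian_motion = prob_space P for P :: "'a measure" +
  fixes d :: nat and W :: "real \<Rightarrow> nat \<Rightarrow> 'a \<Rightarrow> real"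
  assumes std_brownian: "std_brownian P d W"
begin

lemma W_measurable: "t \<ge> 0 \<Longrightarrow> k \<in> {1..d} \<Longrightarrow> W t k \<in> borel_measurable P"
  using std_brownian unfolding std_brownian_def by auto

lemma W_continuous_on:
  assumes "\<omega> \<in> space P" "k \<in> {1..d}" "0 \<le> a"
  shows "continuous_on {a..b} (\<lambda>t. W t k \<omega>)"
proof -
  have "continuous_on {0..} (\<lambda>t. W t k \<omega>)"
    using std_brownian assms unfolding std_brownian_def by blast
  then show ?thesis by (rule continuous_on_subset) (use assms in auto)
qed

context
  fixes ts :: "nat \<Rightarrow> real" and K :: nat
  assumes ts_nonneg: "0 \<le> ts 0" and ts_less: "\<And>p. p < K \<Longrightarrow> ts p < ts (Suc p)"
begin

lemma indep_increments:
  "indep_vars (\<lambda>_. borel) (\<lambda>i \<omega>. W (ts (Suc (fst i))) (snd i) \<omega> - W (ts (fst i)) (snd i) \<omega>)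
     ({..<K} \<times> {1..d})"
  using std_brownian ts_nonneg ts_less unfolding std_brownian_def by blast

lemma increment_distributed:
  "p < K \<Longrightarrow> k \<in> {1..d} \<Longrightarrow>
     distributed P lborel (\<lambda>\<omega>. W (ts (Suc p)) k \<omega> - W (ts p) k \<omega>)
       (normal_density 0 (sqrt (ts (Suc p) - ts p)))"
  using std_brownian ts_nonneg ts_less unfolding std_brownian_def by blast

lemma char_increment_sum:
  "(CLINT \<omega>|P. iexp (t * (\<Sum>k\<in>{1..d}. \<Sum>p<K. \<alpha> k p * (W (ts (Suc p)) k \<omega> - W (ts p) k \<omega>))))
     = complex_of_real (exp (- (t^2 * (\<Sum>k\<in>{1..d}. \<Sum>p<K. (\<alpha> k p)^2 * (ts (Suc p) - ts p))) / 2))"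
proof -
  let ?I = "{..<K} \<times> {1..d}"
  define X where "X = (\<lambda>i \<omega>. \<alpha> (snd i) (fst i) * (W (ts (Suc (fst i))) (snd i) \<omega> - W (ts (fst i)) (snd i) \<omega>))"
  define \<sigma> where "\<sigma> = (\<lambda>i :: nat \<times> nat. sqrt (ts (Suc (fst i)) - ts (fst i)))"
  have indep: "indep_vars (\<lambda>_. borel) X ?I"
    unfolding X_def by (rule indep_vars_compose2[OF indep_increments]) measurable
  have X: "random_variable borel (X i)" if "i \<in> ?I" for i
    using indep that by (auto simp: indep_vars_def)
  have "(\<Sum>k\<in>{1..d}. \<Sum>p<K. \<alpha> k p * (W (ts (Suc p)) k \<omega> - W (ts p) k \<omega>)) = (\<Sum>i\<in>?I. X i \<omega>)" for \<omega>
    unfolding X_def by (subst sum.swap) (simp add: sum.cartesian_product case_prod_beta)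
  then have "(CLINT \<omega>|P. iexp (t * (\<Sum>k\<in>{1..d}. \<Sum>p<K. \<alpha> k p * (W (ts (Suc p)) k \<omega> - W (ts p) k \<omega>))))
      = char (distr P borel (\<lambda>\<omega>. \<Sum>i\<in>?I. X i \<omega>)) t"
    using X by (simp add: char_distr borel_measurable_sum)
  also have "\<dots> = (\<Prod>i\<in>?I. char (distr P borel (X i)) t)"
    by (rule char_distr_sum[OF indep])
  also have "\<dots> = (\<Prod>i\<in>?I. complex_of_real (exp (- ((\<sigma> i * (t * \<alpha> (snd i) (fst i)))^2) / 2)))"
  proof (rule prod.cong[OF refl])
    fix i assume i: "i \<in> ?I"
    have "\<sigma> i > 0" using ts_less i by (auto simp: \<sigma>_def)
    moreover have "distributed P lborel (\<lambda>\<omega>. W (ts (Suc (fst i))) (snd i) \<omega> - W (ts (fst i)) (snd i) \<omega>)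
        (normal_density 0 (\<sigma> i))"
      using increment_distributed[of "fst i" "snd i"] i by (auto simp: \<sigma>_def)
    moreover have "char (distr P borel (X i)) t = (CLINT \<omega>|P. iexp ((t * \<alpha> (snd i) (fst i))
        * (W (ts (Suc (fst i))) (snd i) \<omega> - W (ts (fst i)) (snd i) \<omega>)))"
      unfolding char_distr[OF X[OF i]] by (simp add: X_def mult.assoc)
    ultimately show "char (distr P borel (X i)) t = complex_of_real (exp (- ((\<sigma> i * (t * \<alpha> (snd i) (fst i)))^2) / 2))"
      by (simp only: char_normal_distributed)
  qed
  also have "\<dots> = complex_of_real (exp (\<Sum>i\<in>?I. - ((\<sigma> i * (t * \<alpha> (snd i) (fst i)))^2) / 2))"
    by (simp add: exp_sum of_real_prod)
  also have "(\<Sum>i\<in>?I. - ((\<sigma> i * (t * \<alpha> (snd i) (fst i)))^2) / 2)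
      = - (t^2 * (\<Sum>i\<in>?I. (\<alpha> (snd i) (fst i))^2 * (\<sigma> i)^2)) / 2"
    by (simp add: power_mult_distrib sum_distrib_left sum_negf mult_ac flip: sum_divide_distrib)
  also have "(\<Sum>i\<in>?I. (\<alpha> (snd i) (fst i))^2 * (\<sigma> i)^2) = (\<Sum>p<K. \<Sum>k\<in>{1..d}. (\<alpha> k p)^2 * (ts (Suc p) - ts p))"
    unfolding sum.cartesian_product using ts_less by (intro sum.cong refl) (auto simp: \<sigma>_def less_imp_le)
  also have "\<dots> = (\<Sum>k\<in>{1..d}. \<Sum>p<K. (\<alpha> k p)^2 * (ts (Suc p) - ts p))"
    by (rule sum.swap)
  finally show ?thesis .
qed

end

end

context brownian_motion
begin

lemma riemann_stieltjes_sum_measurable: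
  assumes "0 \<le> a" "a \<le> b"
  shows "riemann_stieltjes_sum W d a b F K \<in> borel_measurable P"
proof -
  have "0 \<le> grid a b K p" for p using assms grid_mono[of a b 0 p K] by simp
  then show ?thesis
    unfolding riemann_stieltjes_sum_def by (intro borel_measurable_sum borel_measurable_times
      borel_measurable_diff borel_measurable_const W_measurable) auto
qed

lemma wiener_integral_measurable_dyadic:
  assumes a: "0 \<le> a" and ab: "a < b" and F: "\<And>k. k \<in> {1..d} \<Longrightarrow> C1_on a b (F k) (F' k)"
    and space: "space N = space P"
    and sums: "\<And>k. riemann_stieltjes_sum W d a b F (2 ^ k) \<in> borel_measurable N"
  shows "wiener_integral W d a b F F' \<in> borel_measurable N"
proof (rule borel_measurable_LIMSEQ_real[OF _ sums])
  fix \<omega> assume "\<omega> \<in> space N"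
  then have "(\<lambda>K. riemann_stieltjes_sum W d a b F K \<omega>) \<longlonglongrightarrow> wiener_integral W d a b F F' \<omega>"
    using space F a by (intro riemann_stieltjes_sum_tendsto[OF ab] W_continuous_on) auto
  from LIMSEQ_subseq_LIMSEQ[OF this, of "\<lambda>k. 2 ^ k"]
  show "(\<lambda>k. riemann_stieltjes_sum W d a b F (2 ^ k) \<omega>) \<longlonglongrightarrow> wiener_integral W d a b F F' \<omega>"
    by (simp add: strict_mono_def comp_def)
qed

context
  fixes a b :: real and F F' :: "nat \<Rightarrow> real \<Rightarrow> real"
  assumes a_nonneg: "0 \<le> a" and a_less_b: "a < b"
    and F: "\<And>k. k \<in> {1..d} \<Longrightarrow> C1_on a b (F k) (F' k)"
begin

lemma wiener_integral_measurable: "wiener_integral W d a b F F' \<in> borel_measurable P"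
  using a_nonneg a_less_b
  by (intro wiener_integral_measurable_dyadic F riemann_stieltjes_sum_measurable) auto

lemma char_riemann_stieltjes_sum:
  assumes K: "K > 0"
  shows "(CLINT \<omega>|P. iexp (t * riemann_stieltjes_sum W d a b F K \<omega>))
    = complex_of_real (exp (- (t^2 * (\<Sum>k\<in>{1..d}. \<Sum>p<K. (F k (grid a b K p))^2 * ((b - a) / real K))) / 2))"
proof -
  have "0 < (b - a) / real K" using a_less_b K by simp
  then have "grid a b K p < grid a b K (Suc p)" for p
    using grid_Suc_diff[of a b K p] by linarith
  from char_increment_sum[of "grid a b K" K t "\<lambda>k p. F k (grid a b K p)"] this a_nonneg
  show ?thesis unfolding riemann_stieltjes_sum_def by (simp only: grid_Suc_diff grid_0)
qed

lemma riemann_sum_square_tendsto: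
  "(\<lambda>K. \<Sum>k\<in>{1..d}. \<Sum>p<K. (F k (grid a b K p))^2 * ((b - a) / real K))
     \<longlonglongrightarrow> (\<Sum>k\<in>{1..d}. integral {a..b} (\<lambda>s. (F k s)^2))"
proof -
  have "(\<lambda>K. \<Sum>k\<in>{1..d}. \<Sum>p<K. integral {grid a b K p..grid a b K (Suc p)} (\<lambda>_. 1) * (F k (grid a b K p))^2)
      \<longlonglongrightarrow> (\<Sum>k\<in>{1..d}. integral {a..b} (\<lambda>s. 1 * (F k s)^2))"
    using a_less_b C1_on_imp_continuous_on[OF F]
    by (intro tendsto_sum weighted_riemann_sum_tendsto) (auto intro!: continuous_intros grid_mono)
  moreover have "(\<Sum>p<K. integral {grid a b K p..grid a b K (Suc p)} (\<lambda>_. 1) * (F k (grid a b K p))^2)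
      = (\<Sum>p<K. (F k (grid a b K p))^2 * ((b - a) / real K))" for k K
    using grid_mono[of a b _ _ K] grid_Suc_diff[of a b K] a_less_b by (intro sum.cong refl) simp
  ultimately show ?thesis by simp
qed

lemma char_wiener_integral:
  "(CLINT \<omega>|P. iexp (t * wiener_integral W d a b F F' \<omega>))
     = complex_of_real (exp (- (t^2 * (\<Sum>k\<in>{1..d}. integral {a..b} (\<lambda>s. (F k s)^2))) / 2))"
proof (rule LIMSEQ_unique)
  let ?S = "riemann_stieltjes_sum W d a b F"
  show "(\<lambda>K. CLINT \<omega>|P. iexp (t * ?S K \<omega>)) \<longlonglongrightarrow> (CLINT \<omega>|P. iexp (t * wiener_integral W d a b F F' \<omega>))"
  proof (rule integral_dominated_convergence[where w = "\<lambda>_. 1"])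
    show "AE \<omega> in P. (\<lambda>K. iexp (t * ?S K \<omega>)) \<longlonglongrightarrow> iexp (t * wiener_integral W d a b F F' \<omega>)"
      using a_nonneg F
      by (intro AE_I2 isCont_tendsto_compose[OF isCont_iexp] tendsto_mult_left
          riemann_stieltjes_sum_tendsto[OF a_less_b] W_continuous_on) auto
    show "(\<lambda>\<omega>. iexp (t * ?S K \<omega>)) \<in> borel_measurable P" for K
      using riemann_stieltjes_sum_measurable[OF a_nonneg less_imp_le[OF a_less_b], of F K]
      by measurable
  qed (use wiener_integral_measurable in \<open>auto simp: norm_exp_i_times\<close>)
  have "(\<lambda>K. complex_of_real (exp (- (t^2 * (\<Sum>k\<in>{1..d}. \<Sum>p<K. (F k (grid a b K p))^2 * ((b - a) / real K))) / 2)))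
      \<longlonglongrightarrow> complex_of_real (exp (- (t^2 * (\<Sum>k\<in>{1..d}. integral {a..b} (\<lambda>s. (F k s)^2))) / 2))"
    by (intro tendsto_of_real tendsto_exp tendsto_divide tendsto_minus tendsto_mult tendsto_const
        riemann_sum_square_tendsto) simp
  then show "(\<lambda>K. CLINT \<omega>|P. iexp (t * ?S K \<omega>))
      \<longlonglongrightarrow> complex_of_real (exp (- (t^2 * (\<Sum>k\<in>{1..d}. integral {a..b} (\<lambda>s. (F k s)^2))) / 2))"
    by (rule Lim_transform_eventually)
      (intro eventually_sequentiallyI[of 1] char_riemann_stieltjes_sum[symmetric], simp)
qed

lemma wiener_integral_centered_gaussian:
  "gaussian_rv P (wiener_integral W d a b F F')
   \<and> integrable P (wiener_integral W d a b F F') \<and> integral\<^sup>L P (wiener_integral W d a b F F') = 0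
   \<and> integrable P (\<lambda>\<omega>. (wiener_integral W d a b F F' \<omega>)^2)
   \<and> integral\<^sup>L P (\<lambda>\<omega>. (wiener_integral W d a b F F' \<omega>)^2) = (\<Sum>k\<in>{1..d}. integral {a..b} (\<lambda>s. (F k s)^2))"
  using a_less_b C1_on_imp_continuous_on[OF F]
  by (intro centered_gaussian_of_char wiener_integral_measurable char_wiener_integral sum_nonneg
      integral_nonneg integrable_continuous_real continuous_intros) auto

lemmas wiener_integral_gaussian = wiener_integral_centered_gaussian[THEN conjunct1]
lemmas integral_wiener_integral = wiener_integral_centered_gaussian[THEN conjunct2, THEN conjunct2, THEN conjunct1]
lemmas wiener_integral_square_integrable =
  wiener_integral_centered_gaussian[THEN conjunct2, THEN conjunct2, THEN conjunct2, THEN conjunct1]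
lemmas integral_wiener_integral_square =
  wiener_integral_centered_gaussian[THEN conjunct2, THEN conjunct2, THEN conjunct2, THEN conjunct2]

end

lemma wiener_integral_covariance:
  assumes a: "0 \<le> a" and ab: "a < b"
    and F: "\<And>k. k \<in> {1..d} \<Longrightarrow> C1_on a b (F k) (F' k)"
    and G: "\<And>k. k \<in> {1..d} \<Longrightarrow> C1_on a b (G k) (G' k)"
  shows "integral\<^sup>L P (\<lambda>\<omega>. wiener_integral W d a b F F' \<omega> * wiener_integral W d a b G G' \<omega>)
       = (\<Sum>k\<in>{1..d}. integral {a..b} (\<lambda>s. F k s * G k s))"
proof -
  let ?X = "wiener_integral W d a b F F'" and ?Y = "wiener_integral W d a b G G'"
  let ?S = "wiener_integral W d a b (\<lambda>k s. F k s + G k s) (\<lambda>k s. F' k s + G' k s)"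
  have FG: "C1_on a b (\<lambda>s. F k s + G k s) (\<lambda>s. F' k s + G' k s)" if "k \<in> {1..d}" for k
    using C1_on_add F G that by blast
  have "?S \<omega> = ?X \<omega> + ?Y \<omega>" if "\<omega> \<in> space P" for \<omega>
    using F G a that by (intro wiener_integral_add W_continuous_on C1_on_deriv_continuous_on) auto
  then have "integral\<^sup>L P (\<lambda>\<omega>. ?X \<omega> * ?Y \<omega>) = integral\<^sup>L P (\<lambda>\<omega>. ((?S \<omega>)^2 - (?X \<omega>)^2 - (?Y \<omega>)^2) / 2)"
    by (intro Bochner_Integration.integral_cong) (simp_all add: power2_eq_square algebra_simps)
  also have "\<dots> = (\<Sum>k\<in>{1..d}. (integral {a..b} (\<lambda>s. (F k s + G k s)^2)
      - integral {a..b} (\<lambda>s. (F k s)^2) - integral {a..b} (\<lambda>s. (G k s)^2)) / 2)"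
    using wiener_integral_square_integrable[OF a ab] integral_wiener_integral_square[OF a ab] F G FG
    by (simp add: sum_subtractf flip: sum_divide_distrib)
  also have "\<dots> = (\<Sum>k\<in>{1..d}. integral {a..b} (\<lambda>s. F k s * G k s))"
  proof (rule sum.cong[OF refl])
    fix k assume "k \<in> {1..d}"
    then have "continuous_on {a..b} (F k)" "continuous_on {a..b} (G k)"
      using C1_on_imp_continuous_on F G by blast+
    then show "(integral {a..b} (\<lambda>s. (F k s + G k s)^2) - integral {a..b} (\<lambda>s. (F k s)^2)
        - integral {a..b} (\<lambda>s. (G k s)^2)) / 2 = integral {a..b} (\<lambda>s. F k s * G k s)"
      by (simp add: power2_sum integral_add integrable_continuous_real continuous_intros mult.assoc)
  qed
  finally show ?thesis .
qed

lemma wiener_integral_covariance_separable: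
  assumes a: "0 \<le> a" and ab: "a < b" and f: "C1_on a b f f'" and g: "C1_on a b g g'"
  shows "integral\<^sup>L P (\<lambda>\<omega>. wiener_integral W d a b (\<lambda>k s. \<alpha> k * f s) (\<lambda>k s. \<alpha> k * f' s) \<omega>
                         * wiener_integral W d a b (\<lambda>k s. \<beta> k * g s) (\<lambda>k s. \<beta> k * g' s) \<omega>)
       = (\<Sum>k\<in>{1..d}. \<alpha> k * \<beta> k) * integral {a..b} (\<lambda>s. f s * g s)"
proof -
  have "integral {a..b} (\<lambda>s. \<alpha> k * f s * (\<beta> k * g s)) = \<alpha> k * \<beta> k * integral {a..b} (\<lambda>s. f s * g s)" for k
    by (simp add: mult_ac flip: integral_mult_right)
  then show ?thesis
    using wiener_integral_covariance[OF a ab C1_on_cmult[OF f] C1_on_cmult[OF g]]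
    by (simp add: sum_distrib_right)
qed

lemma gaussian_vector_wiener_integral:
  assumes a: "0 \<le> a" and ab: "a < b" and J: "finite J"
    and F: "\<And>j k. j \<in> J \<Longrightarrow> k \<in> {1..d} \<Longrightarrow> C1_on a b (F j k) (F' j k)"
  shows "gaussian_vector P J (\<lambda>j. wiener_integral W d a b (F j) (F' j))"
  unfolding gaussian_vector_def
proof
  fix c :: "nat \<Rightarrow> real"
  have "gaussian_rv P (wiener_integral W d a b (\<lambda>k s. \<Sum>j\<in>J. c j * F j k s) (\<lambda>k s. \<Sum>j\<in>J. c j * F' j k s))"
    using F by (intro wiener_integral_gaussian[OF a ab] C1_on_lincomb J) auto
  moreover have "continuous_on {a..b} (F' j k)" if "j \<in> J" "k \<in> {1..d}" for j k
    using C1_on_deriv_continuous_on F that by blast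
  ultimately show "gaussian_rv P (\<lambda>\<omega>. \<Sum>j\<in>J. c j * wiener_integral W d a b (F j) (F' j) \<omega>)"
    using a by (elim gaussian_rv_cong[rotated]) (auto intro!: wiener_integral_lincomb J W_continuous_on)
qed

definition block_increments :: "real \<Rightarrow> nat \<Rightarrow> nat \<Rightarrow> 'a \<Rightarrow> nat \<times> nat \<Rightarrow> real" where
  "block_increments h K n \<omega> = (\<lambda>i\<in>{K * (n - 1)..<K * n} \<times> {1..d}.
     W (grid 0 h K (Suc (fst i))) (snd i) \<omega> - W (grid 0 h K (fst i)) (snd i) \<omega>)"

definition block_algebra :: "real \<Rightarrow> nat \<Rightarrow> nat \<Rightarrow> 'a measure" where
  "block_algebra h K n = vimage_algebra (space P) (block_increments h K n)
     (Pi\<^sub>M ({K * (n - 1)..<K * n} \<times> {1..d}) (\<lambda>_. borel))"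

lemma block_increments_measurable:
  "h \<ge> 0 \<Longrightarrow> block_increments h K n \<in> measurable P (Pi\<^sub>M ({K * (n - 1)..<K * n} \<times> {1..d}) (\<lambda>_. borel))"
  unfolding block_increments_def
  by (intro measurable_restrict borel_measurable_diff W_measurable) (auto simp: grid_def)

lemma sets_block_algebra:
  "h \<ge> 0 \<Longrightarrow> sets (block_algebra h K n) =
     {block_increments h K n -` A \<inter> space P | A. A \<in> sets (Pi\<^sub>M ({K * (n - 1)..<K * n} \<times> {1..d}) (\<lambda>_. borel))}"
  unfolding block_algebra_def using block_increments_measurable
  by (intro sets_vimage_algebra2) (auto simp: measurable_def)

lemma block_increments_measurable_block_algebra:
  "h \<ge> 0 \<Longrightarrow> block_increments h K n \<in> measurable (block_algebra h K n)
     (Pi\<^sub>M ({K * (n - 1)..<K * n} \<times> {1..d}) (\<lambda>_. borel))"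
  unfolding block_algebra_def using measurable_space[OF block_increments_measurable]
  by (intro measurable_vimage_algebra1) blast

lemma indep_block_algebras:
  assumes h: "h > 0" and K: "K > 0"
  shows "indep_sets (\<lambda>n. sets (block_algebra h K n)) {1..M}"
proof -
  have "indep_vars (\<lambda>_. borel) (\<lambda>i \<omega>. W (grid 0 h K (Suc (fst i))) (snd i) \<omega> - W (grid 0 h K (fst i)) (snd i) \<omega>)
      ({..<M * K} \<times> {1..d})"
    using h K by (intro indep_increments) (simp_all add: grid_def divide_strict_right_mono)
  moreover have "disjoint_family_on (\<lambda>n. {K * (n - 1)..<K * n} \<times> {1..d}) {1..M}"
    unfolding disjoint_family_on_def
  proof (intro ballI impI)
    fix m n assume "m \<in> {1..M}" "n \<in> {1..M}" "m \<noteq> n"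
    then have sep: "K * m \<le> K * (n - 1) \<or> K * n \<le> K * (m - 1)" by (cases "m < n") auto
    show "({K * (m - 1)..<K * m} \<times> {1..d}) \<inter> ({K * (n - 1)..<K * n} \<times> {1..d}) = {}"
    proof (rule ccontr)
      assume "({K * (m - 1)..<K * m} \<times> {1..d}) \<inter> ({K * (n - 1)..<K * n} \<times> {1..d}) \<noteq> {}"
      then obtain q where "K * (m - 1) \<le> q" "q < K * m" "K * (n - 1) \<le> q" "q < K * n" by auto
      with sep show False by linarith
    qed
  qed
  moreover have "{K * (n - 1)..<K * n} \<times> {1..d} \<subseteq> {..<M * K} \<times> {1..d}" if "n \<in> {1..M}" for n
  proof -
    have "K * n \<le> M * K" using that by (simp add: mult.commute)
    then show ?thesis by (auto intro: less_le_trans)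
  qed
  ultimately have "indep_vars (\<lambda>n. Pi\<^sub>M ({K * (n - 1)..<K * n} \<times> {1..d}) (\<lambda>_. borel)) (block_increments h K) {1..M}"
    unfolding block_increments_def[abs_def] by (intro indep_vars_restrict) auto
  then show ?thesis using h by (simp add: indep_vars_def2 sets_block_algebra)
qed

text \<open>Each increment of the coarser grid is the sum of two increments of the finer one.\<close>

lemma sets_block_algebra_refine:
  assumes h: "h \<ge> 0"
  shows "sets (block_algebra h K n) \<subseteq> sets (block_algebra h (2 * K) n)"
proof -
  let ?B = "\<lambda>K. {K * (n - 1)..<K * n} \<times> {1..d}"
  define \<phi> where "\<phi> = (\<lambda>x::nat \<times> nat \<Rightarrow> real. \<lambda>i\<in>?B K. x (2 * fst i, snd i) + x (Suc (2 * fst i), snd i))"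
  have mem: "(2 * fst i, snd i) \<in> ?B (2 * K)" "(Suc (2 * fst i), snd i) \<in> ?B (2 * K)" if "i \<in> ?B K" for i
    using that by (auto simp: mem_Times_iff)
  have "\<phi> \<in> measurable (Pi\<^sub>M (?B (2 * K)) (\<lambda>_. borel)) (Pi\<^sub>M (?B K) (\<lambda>_. borel))"
    unfolding \<phi>_def by (intro measurable_restrict borel_measurable_add measurable_component_singleton mem)
  moreover have "block_increments h K n = (\<lambda>\<omega>. \<phi> (block_increments h (2 * K) n \<omega>))"
    using mem by (intro ext) (auto simp: block_increments_def \<phi>_def grid_double grid_double_Suc)
  moreover note block_increments_measurable_block_algebra[OF h, of "2 * K" n]
  ultimately have "block_increments h K n \<in> measurable (block_algebra h (2 * K) n) (Pi\<^sub>M (?B K) (\<lambda>_. borel))"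
    by simp
  then show ?thesis
    unfolding block_algebra_def[of h K] by (intro sets_image_in_sets) (simp add: block_algebra_def)
qed

lemma riemann_stieltjes_sum_block:
  assumes "K > 0"
  shows "riemann_stieltjes_sum W d (real m * h) (real (Suc m) * h) F K \<omega>
     = (\<Sum>k\<in>{1..d}. \<Sum>p<K. F k (grid (real m * h) (real (Suc m) * h) K p)
                           * block_increments h K (Suc m) \<omega> (K * m + p, k))"
  unfolding riemann_stieltjes_sum_def block_increments_def grid_shift[OF assms]
  using assms by (intro sum.cong refl) simp

lemma wiener_integral_measurable_blocks:
  assumes h: "h > 0" and F: "\<And>k. k \<in> {1..d} \<Longrightarrow> C1_on (real m * h) (real (Suc m) * h) (F k) (F' k)"
  shows "wiener_integral W d (real m * h) (real (Suc m) * h) F F'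
     \<in> borel_measurable (sigma (space P) (\<Union>k. sets (block_algebra h (2 ^ k) (Suc m))))"
proof (rule wiener_integral_measurable_dyadic[OF _ _ F])
  let ?G = "sigma (space P) (\<Union>k. sets (block_algebra h (2 ^ k) (Suc m)))"
  have sets_G: "(\<Union>k. sets (block_algebra h (2 ^ k) (Suc m))) \<subseteq> Pow (space P)"
    using sets.sets_into_space by (fastforce simp: block_algebra_def)
  then show space_G: "space ?G = space P" by simp
  show "0 \<le> real m * h" "real m * h < real (Suc m) * h" using h by auto
  fix k
  let ?K = "2 ^ k :: nat"
  let ?B = "Pi\<^sub>M ({?K * (Suc m - 1)..<?K * Suc m} \<times> {1..d}) (\<lambda>_. borel)"
  have "sets (block_algebra h ?K (Suc m)) \<subseteq> sets ?G" using sets_G by auto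
  moreover have "space (block_algebra h ?K (Suc m)) = space ?G"
    using space_G by (simp add: block_algebra_def)
  ultimately have "measurable (block_algebra h ?K (Suc m)) ?B \<subseteq> measurable ?G ?B"
    by (rule measurable_mono[OF order_refl refl])
  with block_increments_measurable_block_algebra[of h ?K "Suc m"] h
  have V: "block_increments h ?K (Suc m) \<in> measurable ?G ?B" by auto
  have "(\<lambda>\<omega>. block_increments h ?K (Suc m) \<omega> (?K * m + p, k')) \<in> borel_measurable ?G"
    if "p < ?K" "k' \<in> {1..d}" for p k'
  proof -
    have "(?K * m + p, k') \<in> {?K * (Suc m - 1)..<?K * Suc m} \<times> {1..d}" using that by simp
    from measurable_compose[OF V measurable_component_singleton[OF this]] show ?thesis by simp
  qed
  moreover have "riemann_stieltjes_sum W d (real m * h) (real (Suc m) * h) F ?K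
      = (\<lambda>\<omega>. \<Sum>k'\<in>{1..d}. \<Sum>p<?K. F k' (grid (real m * h) (real (Suc m) * h) ?K p)
                            * block_increments h ?K (Suc m) \<omega> (?K * m + p, k'))"
    by (intro ext riemann_stieltjes_sum_block) simp
  ultimately show "riemann_stieltjes_sum W d (real m * h) (real (Suc m) * h) F ?K \<in> borel_measurable ?G"
    by (simp add: borel_measurable_sum borel_measurable_times)
qed

text \<open>The Wiener integral over \<open>[(n - 1) h, n h]\<close> is measurable with respect to the increments of
  \<open>W\<close> on the dyadic refinements of that interval; these \<open>\<sigma>\<close>-algebras increase with the level
  of refinement and are independent across intervals at every level.\<close>

lemma indep_wiener_integrals:
  fixes h :: real and J :: "nat set" and F F' :: "nat \<Rightarrow> nat \<Rightarrow> nat \<Rightarrow> real \<Rightarrow> real"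
  assumes h: "h > 0"
    and F: "\<And>n j k. n \<in> {1..M} \<Longrightarrow> j \<in> J \<Longrightarrow> k \<in> {1..d} \<Longrightarrow>
              C1_on (real (n - 1) * h) (real n * h) (F n j k) (F' n j k)"
  shows "indep_vars (\<lambda>_. Pi\<^sub>M J (\<lambda>_. borel))
     (\<lambda>n \<omega>. \<lambda>j\<in>J. wiener_integral W d (real (n - 1) * h) (real n * h) (F n j) (F' n j) \<omega>) {1..M}"
proof -
  define X where "X = (\<lambda>n \<omega>. \<lambda>j\<in>J. wiener_integral W d (real (n - 1) * h) (real n * h) (F n j) (F' n j) \<omega>)"
  define \<G> where "\<G> = (\<lambda>n. \<Union>k. sets (block_algebra h (2 ^ k) n))"
  have \<G>: "\<G> n \<subseteq> Pow (space P)" for n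
    using sets.sets_into_space by (fastforce simp: \<G>_def block_algebra_def)
  have X: "X n \<in> measurable (sigma (space P) (\<G> n)) (Pi\<^sub>M J (\<lambda>_. borel))" if n: "n \<in> {1..M}" for n
  proof -
    obtain m where m: "n = Suc m" using n by (cases n) auto
    have "C1_on (real m * h) (real (Suc m) * h) (F n j k) (F' n j k)" if "j \<in> J" "k \<in> {1..d}" for j k
      using F[OF n that] unfolding m by simp
    then show ?thesis
      unfolding X_def \<G>_def m diff_Suc_1 by (intro measurable_restrict wiener_integral_measurable_blocks h)
  qed
  have "sets (block_algebra h (2 ^ k) n) \<subseteq> sets (block_algebra h (2 ^ Suc k) n)" for k n
    using sets_block_algebra_refine[of h "2 ^ k" n] h by simp
  then have "indep_sets (\<lambda>n. sigma_sets (space P) (\<G> n)) {1..M}"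
    unfolding \<G>_def using h
    by (intro indep_sets_sigma_Union_incseq indep_block_algebras) (auto simp: Int_stable_def)
  moreover have "{X n -` A \<inter> space P | A. A \<in> sets (Pi\<^sub>M J (\<lambda>_. borel))} \<subseteq> sigma_sets (space P) (\<G> n)"
    if "n \<in> {1..M}" for n
    using measurable_sets[OF X[OF that]] \<G>[of n] by auto
  ultimately have "indep_sets (\<lambda>n. {X n -` A \<inter> space P | A. A \<in> sets (Pi\<^sub>M J (\<lambda>_. borel))}) {1..M}"
    by (rule indep_sets_mono_sets)
  moreover have "X n \<in> measurable P (Pi\<^sub>M J (\<lambda>_. borel))" if "n \<in> {1..M}" for n
  proof -
    have "0 \<le> real (n - 1) * h" "real (n - 1) * h < real n * h" using h that by auto
    then show ?thesis
      unfolding X_def using F[OF that] by (intro measurable_restrict wiener_integral_measurable) auto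
  qed
  ultimately show ?thesis unfolding indep_vars_def2 X_def by blast
qed
end

section \<open>The futures-spot model\<close>

lemma sum_lower_triangular:
  assumes "lower_triangular d A" "i \<in> {1..d}"
  shows "(\<Sum>j\<in>{1..i}. A i j * x j) = (\<Sum>j\<in>{1..d}. A i j * x j)"
  by (rule sum.mono_neutral_left) (use assms in \<open>auto simp: lower_triangular_def\<close>)

text \<open>The objects introduced by \<open>defines\<close> in the theorem are parameters here, tied to their
  definitions by assumptions, so that the theorem can interpret the locale verbatim.\<close>

locale futures_spot_model = brownian_motion P "2 * N" W
  for P :: "'a measure" and N :: nat and W :: "real \<Rightarrow> nat \<Rightarrow> 'a \<Rightarrow> real" +
  fixes r T :: real and Tm :: "nat \<Rightarrow> real" and tS :: "nat \<Rightarrow> nat \<Rightarrow> real"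
    and F S :: "real \<Rightarrow> nat \<Rightarrow> 'a \<Rightarrow> real" and \<mu>F \<mu>S \<eta>F \<eta>S :: "nat \<Rightarrow> real" and M :: nat
    and \<Sigma> :: "nat \<Rightarrow> nat \<Rightarrow> real" and \<sigma>F \<sigma>S :: "nat \<Rightarrow> real" and Z :: "real \<Rightarrow> nat \<Rightarrow> 'a \<Rightarrow> real"
    and \<kappa> m :: "nat \<Rightarrow> real" and \<phi> :: "nat \<Rightarrow> nat \<Rightarrow> real" and tg :: "nat \<Rightarrow> real"
  assumes \<Sigma>_def: "\<Sigma> = cov_of (2 * N) tS"
    and \<sigma>F_def: "\<sigma>F = (\<lambda>i. sqrt (\<Sigma> i i))"
    and \<sigma>S_def: "\<sigma>S = (\<lambda>i. sqrt (\<Sigma> (N + i) (N + i)))"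
    and Z_def: "Z = Z_proc r Tm F S"
    and \<kappa>_def: "\<kappa> = (\<lambda>i. \<eta>S i - \<eta>F i)"
    and m_def: "m = (\<lambda>i. r + \<mu>F i - \<mu>S i - (\<sigma>F i ^ 2 - \<sigma>S i ^ 2) / 2)"
    and \<phi>_def: "\<phi> = (\<lambda>n i. phi_coef T M (Tm i) (\<kappa> i) n)"
    and tg_def: "tg = (\<lambda>n::nat. real n * T / real M)"
    and T: "T > 0" and Tm: "\<forall>i\<in>{1..N}. T < Tm i"
    and tri: "lower_triangular (2 * N) tS"
    and pos: "\<forall>\<omega>\<in>space P. \<forall>t\<in>{0..T}. \<forall>i\<in>{1..N}. F t i \<omega> > 0 \<and> S t i \<omega> > 0"
    and cont: "\<forall>\<omega>\<in>space P. \<forall>i\<in>{1..N}.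
                 continuous_on {0..T} (\<lambda>t. F t i \<omega>) \<and> continuous_on {0..T} (\<lambda>t. S t i \<omega>)"
    and SDE_F: "\<forall>\<omega>\<in>space P. \<forall>t\<in>{0..T}. \<forall>i\<in>{1..N}.
       ln (F t i \<omega>) = ln (F 0 i \<omega>)
         + integral {0..t} (\<lambda>s. \<mu>F i - \<sigma>F i ^ 2 / 2 + \<eta>F i / (Tm i - s) * Z s i \<omega>)
         + (\<Sum>j\<in>{1..i}. tS i j * W t j \<omega>)"
    and SDE_S: "\<forall>\<omega>\<in>space P. \<forall>t\<in>{0..T}. \<forall>i\<in>{1..N}.
       ln (S t i \<omega>) = ln (S 0 i \<omega>)
         + integral {0..t} (\<lambda>s. \<mu>S i - \<sigma>S i ^ 2 / 2 + \<eta>S i / (Tm i - s) * Z s i \<omega>)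
         + (\<Sum>j\<in>{1..N + i}. tS (N + i) j * W t j \<omega>)"
    and etaS0: "\<forall>i\<in>{1..N}. \<eta>S i = 0"
    and M: "M \<ge> 1"
begin

text \<open>Components \<open>1..N\<close> of the noise are the spot noises \<open>\<epsilon>\<^sub>n\<^sub>,\<^sub>S\<close>, components \<open>N + 1..2 N\<close> the basis
  noises \<open>\<epsilon>\<^sub>n\<^sub>,\<^sub>Z\<close>; both are Wiener integrals of separable integrands \<open>coef\<^sub>j\<^sub>k \<cdot> profile\<^sub>j(s)\<close>.\<close>

definition noise_coef :: "nat \<Rightarrow> nat \<Rightarrow> real" where
  "noise_coef j k = (if j \<le> N then tS (N + j) k else tS (j - N) k - tS j k)"

definition noise_profile :: "nat \<Rightarrow> real \<Rightarrow> real" where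
  "noise_profile j s = (if j \<le> N then 1 else (Tm (j - N) / (Tm (j - N) - s)) powr \<kappa> (j - N))"

definition noise_profile' :: "nat \<Rightarrow> real \<Rightarrow> real" where
  "noise_profile' j s =
     (if j \<le> N then 0 else \<kappa> (j - N) * (Tm (j - N) / (Tm (j - N) - s)) powr \<kappa> (j - N) / (Tm (j - N) - s))"

definition noise :: "nat \<Rightarrow> nat \<Rightarrow> 'a \<Rightarrow> real" where
  "noise n j = wiener_integral W (2 * N) (tg (n - 1)) (tg n)
     (\<lambda>k s. noise_coef j k * noise_profile j s) (\<lambda>k s. noise_coef j k * noise_profile' j s)"

lemma tg_interval:
  assumes "n \<in> {1..M}"
  shows "0 \<le> tg (n - 1)" and "tg (n - 1) < tg n" and "tg n \<le> T" and "tg n - tg (n - 1) = T / real M"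
proof -
  obtain k where k: "n = Suc k" using assms by (cases n) auto
  have "real (Suc k) * T \<le> real M * T" using assms k T by (intro mult_right_mono) auto
  then show "0 \<le> tg (n - 1)" "tg (n - 1) < tg n" "tg n \<le> T" "tg n - tg (n - 1) = T / real M"
    using T M unfolding tg_def k by (auto simp: field_simps)
qed

lemma C1_on_noise_profile:
  assumes n: "n \<in> {1..M}" and j: "j \<in> {1..2 * N}"
  shows "C1_on (tg (n - 1)) (tg n) (noise_profile j) (noise_profile' j)"
proof (cases "j \<le> N")
  case True
  then show ?thesis
    using C1_on_const[of _ _ 1] by (simp add: noise_profile_def[abs_def] noise_profile'_def[abs_def])
next
  case False
  then have "j - N \<in> {1..N}" using j by auto
  then have "0 < Tm (j - N)" "tg n < Tm (j - N)" using Tm T tg_interval(3)[OF n] by fastforce+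
  then show ?thesis
    using False C1_on_integrating_factor by (simp add: noise_profile_def[abs_def] noise_profile'_def[abs_def])
qed

lemma noise_eq:
  assumes n: "n \<in> {1..M}" and j: "j \<in> {1..2 * N}" and \<omega>: "\<omega> \<in> space P"
  defines "X \<equiv> \<lambda>s. \<Sum>k\<in>{1..2 * N}. noise_coef j k * W s k \<omega>"
  shows "noise n j \<omega> = noise_profile j (tg n) * X (tg n) - noise_profile j (tg (n - 1)) * X (tg (n - 1))
           - integral {tg (n - 1)..tg n} (\<lambda>s. noise_profile' j s * X s)"
  unfolding noise_def X_def using tg_interval[OF n] \<omega>
  by (intro wiener_integral_separable C1_on_noise_profile[OF n j] W_continuous_on) auto

lemma Z_eq_ln:
  assumes "\<omega> \<in> space P" "t \<in> {0..T}" "i \<in> {1..N}"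
  shows "Z t i \<omega> = ln (F t i \<omega>) - ln (S t i \<omega>) - r * (Tm i - t)"
proof -
  have "F t i \<omega> > 0" "S t i \<omega> > 0" using pos assms by auto
  then show ?thesis unfolding Z_def Z_proc_def by (simp add: ln_div)
qed

lemma ln_futures_step:
  assumes n: "n \<in> {1..M}" and \<omega>: "\<omega> \<in> space P" and i: "i \<in> {1..N}"
  shows "ln (F (tg n) i \<omega>) = Z (tg n) i \<omega> + ln (S (tg n) i \<omega>) + r * (Tm i - tg n)"
  using Z_eq_ln[OF \<omega> _ i, of "tg n"] tg_interval[OF n] by simp

lemma ln_spot_eq:
  assumes \<omega>: "\<omega> \<in> space P" and t: "t \<in> {0..T}" and i: "i \<in> {1..N}"
  shows "ln (S t i \<omega>) = ln (S 0 i \<omega>) + t * (\<mu>S i - \<sigma>S i ^ 2 / 2) + (\<Sum>k\<in>{1..2 * N}. tS (N + i) k * W t k \<omega>)"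
proof -
  have drift: "integral {0..t} (\<lambda>s. \<mu>S i - \<sigma>S i ^ 2 / 2 + \<eta>S i / (Tm i - s) * Z s i \<omega>)
      = t * (\<mu>S i - \<sigma>S i ^ 2 / 2)"
    using etaS0 i t by simp
  have diffusion: "(\<Sum>j\<in>{1..N + i}. tS (N + i) j * W t j \<omega>) = (\<Sum>k\<in>{1..2 * N}. tS (N + i) k * W t k \<omega>)"
    using i by (intro sum_lower_triangular[OF tri]) auto
  from SDE_S \<omega> t i have "ln (S t i \<omega>) = ln (S 0 i \<omega>)
      + integral {0..t} (\<lambda>s. \<mu>S i - \<sigma>S i ^ 2 / 2 + \<eta>S i / (Tm i - s) * Z s i \<omega>)
      + (\<Sum>j\<in>{1..N + i}. tS (N + i) j * W t j \<omega>)" by blast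
  then show ?thesis unfolding drift diffusion .
qed

lemma ln_spot_step:
  assumes n: "n \<in> {1..M}" and \<omega>: "\<omega> \<in> space P" and i: "i \<in> {1..N}"
  shows "ln (S (tg n) i \<omega>) = ln (S (tg (n - 1)) i \<omega>) + T / real M * (\<mu>S i - \<sigma>S i ^ 2 / 2) + noise n i \<omega>"
proof -
  have "tg (n - 1) \<in> {0..T}" "tg n \<in> {0..T}" using tg_interval[OF n] by auto
  note ln_spot_eq[OF \<omega> this(1) i] ln_spot_eq[OF \<omega> this(2) i]
  moreover have "noise n i \<omega> = (\<Sum>k\<in>{1..2 * N}. tS (N + i) k * W (tg n) k \<omega>)
                               - (\<Sum>k\<in>{1..2 * N}. tS (N + i) k * W (tg (n - 1)) k \<omega>)"
    using noise_eq[OF n _ \<omega>, of i] i by (simp add: noise_coef_def noise_profile_def noise_profile'_def)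
  moreover have "tg n * (\<mu>S i - \<sigma>S i ^ 2 / 2)
      = tg (n - 1) * (\<mu>S i - \<sigma>S i ^ 2 / 2) + T / real M * (\<mu>S i - \<sigma>S i ^ 2 / 2)"
    using tg_interval(4)[OF n] by (simp add: algebra_simps flip: left_diff_distrib)
  ultimately show ?thesis by linarith
qed

lemma Z_continuous_on:
  assumes \<omega>: "\<omega> \<in> space P" and i: "i \<in> {1..N}"
  shows "continuous_on {0..T} (\<lambda>t. Z t i \<omega>)"
proof -
  have "F t i \<omega> \<noteq> 0" "S t i \<omega> \<noteq> 0" if "t \<in> {0..T}" for t
    using pos \<omega> i that by fastforce+
  moreover have "continuous_on {0..T} (\<lambda>t. F t i \<omega>)" "continuous_on {0..T} (\<lambda>t. S t i \<omega>)"
    using cont \<omega> i by auto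
  ultimately show ?thesis
    unfolding Z_def Z_proc_def by (intro continuous_intros) auto
qed

lemma basis_integral_equation:
  assumes \<omega>: "\<omega> \<in> space P" and t: "t \<in> {0..T}" and i: "i \<in> {1..N}"
  shows "Z t i \<omega> = (ln (F 0 i \<omega>) - ln (S 0 i \<omega>) - r * Tm i)
     + integral {0..t} (\<lambda>s. m i - \<kappa> i / (Tm i - s) * Z s i \<omega>)
     + (\<Sum>k\<in>{1..2 * N}. noise_coef (N + i) k * W t k \<omega>)"
proof -
  define h where "h = (\<lambda>s. \<mu>F i - \<sigma>F i ^ 2 / 2 + \<eta>F i / (Tm i - s) * Z s i \<omega>)"
  have "ln (F t i \<omega>) = ln (F 0 i \<omega>) + integral {0..t} h + (\<Sum>j\<in>{1..i}. tS i j * W t j \<omega>)"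
    using SDE_F \<omega> t i unfolding h_def by blast
  moreover have "(\<Sum>j\<in>{1..i}. tS i j * W t j \<omega>) = (\<Sum>k\<in>{1..2 * N}. tS i k * W t k \<omega>)"
    using i by (intro sum_lower_triangular[OF tri]) auto
  moreover have "(\<Sum>k\<in>{1..2 * N}. noise_coef (N + i) k * W t k \<omega>)
      = (\<Sum>k\<in>{1..2 * N}. tS i k * W t k \<omega>) - (\<Sum>k\<in>{1..2 * N}. tS (N + i) k * W t k \<omega>)"
    using i by (simp add: noise_coef_def left_diff_distrib sum_subtractf)
  moreover have "integral {0..t} (\<lambda>s. m i - \<kappa> i / (Tm i - s) * Z s i \<omega>)
      = integral {0..t} h + t * (r - (\<mu>S i - \<sigma>S i ^ 2 / 2))"
  proof -
    have "m i - \<kappa> i / (Tm i - s) * Z s i \<omega> = h s + (r - (\<mu>S i - \<sigma>S i ^ 2 / 2))" for s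
      using etaS0 i by (simp add: m_def h_def \<kappa>_def field_simps)
    moreover have "T < Tm i" using Tm i by auto
    then have "continuous_on {0..t} h"
      unfolding h_def using t
      by (intro continuous_intros continuous_on_subset[OF Z_continuous_on[OF \<omega> i]]) auto
    ultimately show ?thesis
      using t by (simp add: integral_add integrable_continuous_real)
  qed
  ultimately show ?thesis
    unfolding Z_eq_ln[OF \<omega> t i] using ln_spot_eq[OF \<omega> t i] by (simp add: algebra_simps)
qed

lemma phi_eq_integral:
  assumes n: "n \<in> {1..M}" and i: "i \<in> {1..N}"
  shows "\<phi> n i = integral {tg (n - 1)..tg n} (\<lambda>s. (Tm i / (Tm i - s)) powr \<kappa> i)"
  using integral_integrating_factor[of "Tm i" "tg (n - 1)" "tg n" "\<kappa> i"] Tm T i tg_interval[OF n]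
  unfolding \<phi>_def phi_coef_def tg_def by force

lemma basis_step:
  assumes n: "n \<in> {1..M}" and \<omega>: "\<omega> \<in> space P" and i: "i \<in> {1..N}"
  shows "(Tm i / (Tm i - tg n)) powr \<kappa> i * Z (tg n) i \<omega>
       = (Tm i / (Tm i - tg (n - 1))) powr \<kappa> i * Z (tg (n - 1)) i \<omega> + \<phi> n i * m i + noise n (N + i) \<omega>"
proof -
  define X where "X = (\<lambda>t. \<Sum>k\<in>{1..2 * N}. noise_coef (N + i) k * W t k \<omega>)"
  have X: "continuous_on {0..T} X" unfolding X_def by (intro continuous_intros W_continuous_on[OF \<omega>]) auto
  have Tm_i: "0 < Tm i" "T < Tm i" using Tm T i by fastforce+
  have Z_eq: "Z t i \<omega> = (ln (F 0 i \<omega>) - ln (S 0 i \<omega>) - r * Tm i)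
      + integral {0..t} (\<lambda>s. m i - \<kappa> i / (Tm i - s) * Z s i \<omega>) + X t" if "t \<in> {0..T}" for t
    unfolding X_def by (rule basis_integral_equation[OF \<omega> that i])
  note integrating_factor_step[OF Tm_i tg_interval(1)[OF n] less_imp_le[OF tg_interval(2)[OF n]]
      tg_interval(3)[OF n] Z_continuous_on[OF \<omega> i] X Z_eq]
  moreover have "noise n (N + i) \<omega> = (Tm i / (Tm i - tg n)) powr \<kappa> i * X (tg n)
      - (Tm i / (Tm i - tg (n - 1))) powr \<kappa> i * X (tg (n - 1))
      - integral {tg (n - 1)..tg n} (\<lambda>s. \<kappa> i * (Tm i / (Tm i - s)) powr \<kappa> i / (Tm i - s) * X s)"
    using noise_eq[OF n _ \<omega>, of "N + i"] i
    by (simp add: X_def noise_profile_def noise_profile'_def)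
  ultimately show ?thesis
    using phi_eq_integral[OF n i] by (simp add: mult.commute)
qed

lemma indep_noise:
  "indep_vars (\<lambda>_. Pi\<^sub>M {1..2 * N} (\<lambda>_. borel)) (\<lambda>n \<omega>. \<lambda>k\<in>{1..2 * N}. noise n k \<omega>) {1..M}"
proof -
  have tg: "tg n = real n * (T / real M)" for n unfolding tg_def by simp
  have "indep_vars (\<lambda>_. Pi\<^sub>M {1..2 * N} (\<lambda>_. borel))
      (\<lambda>n \<omega>. \<lambda>j\<in>{1..2 * N}. wiener_integral W (2 * N) (real (n - 1) * (T / real M)) (real n * (T / real M))
        (\<lambda>k s. noise_coef j k * noise_profile j s) (\<lambda>k s. noise_coef j k * noise_profile' j s) \<omega>) {1..M}"
    using T M C1_on_noise_profile unfolding tg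
    by (intro indep_wiener_integrals C1_on_cmult) auto
  then show ?thesis unfolding noise_def tg .
qed

lemma gaussian_noise: "n \<in> {1..M} \<Longrightarrow> gaussian_vector P {1..2 * N} (noise n)"
  unfolding noise_def[abs_def] using tg_interval[of n]
  by (intro gaussian_vector_wiener_integral C1_on_cmult C1_on_noise_profile) auto

lemma integral_noise: "n \<in> {1..M} \<Longrightarrow> k \<in> {1..2 * N} \<Longrightarrow> integral\<^sup>L P (noise n k) = 0"
  unfolding noise_def using tg_interval[of n]
  by (intro integral_wiener_integral C1_on_cmult C1_on_noise_profile) auto

lemma noise_covariance:
  assumes n: "n \<in> {1..M}" and p: "p \<in> {1..2 * N}" and q: "q \<in> {1..2 * N}"
  shows "integral\<^sup>L P (\<lambda>\<omega>. noise n p \<omega> * noise n q \<omega>)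
       = (\<Sum>k\<in>{1..2 * N}. noise_coef p k * noise_coef q k)
         * integral {tg (n - 1)..tg n} (\<lambda>s. noise_profile p s * noise_profile q s)"
  unfolding noise_def using tg_interval[OF n]
  by (intro wiener_integral_covariance_separable C1_on_noise_profile n p q) auto

lemma noise_covariance_spot:
  assumes n: "n \<in> {1..M}" and i: "i \<in> {1..N}" and j: "j \<in> {1..N}"
  shows "integral\<^sup>L P (\<lambda>\<omega>. noise n i \<omega> * noise n j \<omega>) = T / real M * \<Sigma> (N + i) (N + j)"
  using noise_covariance[OF n, of i j] i j tg_interval[OF n]
  by (simp add: noise_coef_def noise_profile_def \<Sigma>_def cov_of_def mult.commute)

lemma noise_covariance_spot_basis:
  assumes n: "n \<in> {1..M}" and i: "i \<in> {1..N}" and j: "j \<in> {1..N}"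
  shows "integral\<^sup>L P (\<lambda>\<omega>. noise n i \<omega> * noise n (N + j) \<omega>) = (\<Sigma> j (N + i) - \<Sigma> (N + i) (N + j)) * \<phi> n j"
  using noise_covariance[OF n, of i "N + j"] i j phi_eq_integral[OF n j]
  by (simp add: noise_coef_def noise_profile_def \<Sigma>_def cov_of_def right_diff_distrib sum_subtractf
      mult.commute)

lemma noise_covariance_basis:
  assumes n: "n \<in> {1..M}" and i: "i \<in> {1..N}" and j: "j \<in> {1..N}"
  shows "integral\<^sup>L P (\<lambda>\<omega>. noise n (N + i) \<omega> * noise n (N + j) \<omega>)
       = (\<Sigma> i j + \<Sigma> (N + i) (N + j) - \<Sigma> i (N + j) - \<Sigma> j (N + i))
         * integral {tg (n - 1)..tg n} (\<lambda>s. (Tm i / (Tm i - s)) powr \<kappa> i * (Tm j / (Tm j - s)) powr \<kappa> j)"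
proof -
  have "(\<Sum>k\<in>{1..2 * N}. (tS i k - tS (N + i) k) * (tS j k - tS (N + j) k))
      = \<Sigma> i j + \<Sigma> (N + i) (N + j) - \<Sigma> i (N + j) - \<Sigma> j (N + i)"
    by (simp add: \<Sigma>_def cov_of_def algebra_simps sum.distrib sum_subtractf)
  then show ?thesis
    using noise_covariance[OF n, of "N + i" "N + j"] i j
    by (simp add: noise_coef_def noise_profile_def)
qed
end

theorem corollary1:
  fixes P :: "'a measure"
    and N :: nat and r T :: real and Tm :: "nat \<Rightarrow> real"
    and tS :: "nat \<Rightarrow> nat \<Rightarrow> real"
    and W F S :: "real \<Rightarrow> nat \<Rightarrow> 'a \<Rightarrow> real"
    and \<mu>F \<mu>S \<eta>F \<eta>S :: "nat \<Rightarrow> real"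
    and M :: nat
  defines "\<Sigma> \<equiv> cov_of (2 * N) tS"
  defines "\<sigma>F \<equiv> (\<lambda>i. sqrt (\<Sigma> i i))"
  defines "\<sigma>S \<equiv> (\<lambda>i. sqrt (\<Sigma> (N + i) (N + i)))"
  defines "Z \<equiv> Z_proc r Tm F S"
  defines "\<kappa> \<equiv> (\<lambda>i. \<eta>S i - \<eta>F i)"
  defines "m \<equiv> (\<lambda>i. r + \<mu>F i - \<mu>S i - (\<sigma>F i ^ 2 - \<sigma>S i ^ 2) / 2)"
  defines "\<phi> \<equiv> (\<lambda>n i. phi_coef T M (Tm i) (\<kappa> i) n)"
  defines "tg \<equiv> (\<lambda>n::nat. real n * T / real M)"
  assumes P: "prob_space P"
    and N: "N \<ge> 1" and r: "r \<ge> 0" and T: "T > 0"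
    and Tm: "\<forall>i\<in>{1..N}. T < Tm i"
    and tri: "lower_triangular (2 * N) tS"
    and posdef: "pos_def (2 * N) \<Sigma>"
    and eta: "\<forall>i\<in>{1..N}. \<eta>F i < \<eta>S i"
    and BM: "std_brownian P (2 * N) W"
    and meas: "\<forall>t\<in>{0..T}. \<forall>i\<in>{1..N}. F t i \<in> borel_measurable P \<and> S t i \<in> borel_measurable P"
    and pos: "\<forall>\<omega>\<in>space P. \<forall>t\<in>{0..T}. \<forall>i\<in>{1..N}. F t i \<omega> > 0 \<and> S t i \<omega> > 0"
    and cont: "\<forall>\<omega>\<in>space P. \<forall>i\<in>{1..N}.
                 continuous_on {0..T} (\<lambda>t. F t i \<omega>) \<and> continuous_on {0..T} (\<lambda>t. S t i \<omega>)"
    and SDE_F: "\<forall>\<omega>\<in>space P. \<forall>t\<in>{0..T}. \<forall>i\<in>{1..N}.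
       ln (F t i \<omega>) = ln (F 0 i \<omega>)
         + integral {0..t} (\<lambda>s. \<mu>F i - \<sigma>F i ^ 2 / 2 + \<eta>F i / (Tm i - s) * Z s i \<omega>)
         + (\<Sum>j\<in>{1..i}. tS i j * W t j \<omega>)"
    and SDE_S: "\<forall>\<omega>\<in>space P. \<forall>t\<in>{0..T}. \<forall>i\<in>{1..N}.
       ln (S t i \<omega>) = ln (S 0 i \<omega>)
         + integral {0..t} (\<lambda>s. \<mu>S i - \<sigma>S i ^ 2 / 2 + \<eta>S i / (Tm i - s) * Z s i \<omega>)
         + (\<Sum>j\<in>{1..N + i}. tS (N + i) j * W t j \<omega>)"
    and etaS0: "\<forall>i\<in>{1..N}. \<eta>S i = 0"
    and M: "M \<ge> 1"
  shows "\<exists>\<epsilon> :: nat \<Rightarrow> nat \<Rightarrow> 'a \<Rightarrow> real.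
     (\<forall>n\<in>{1..M}. \<forall>\<omega>\<in>space P. \<forall>i\<in>{1..N}.
        ln (S (tg n) i \<omega>) = ln (S (tg (n - 1)) i \<omega>) + T / real M * (\<mu>S i - \<sigma>S i ^ 2 / 2) + \<epsilon> n i \<omega>
      \<and> (Tm i / (Tm i - tg n)) powr \<kappa> i * Z (tg n) i \<omega>
          = (Tm i / (Tm i - tg (n - 1))) powr \<kappa> i * Z (tg (n - 1)) i \<omega> + \<phi> n i * m i + \<epsilon> n (N + i) \<omega>
      \<and> ln (F (tg n) i \<omega>) = Z (tg n) i \<omega> + ln (S (tg n) i \<omega>) + r * (Tm i - tg n))
   \<and> prob_space.indep_vars P (\<lambda>_. Pi\<^sub>M {1..2 * N} (\<lambda>_. borel))
       (\<lambda>n \<omega>. \<lambda>k\<in>{1..2 * N}. \<epsilon> n k \<omega>) {1..M}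
   \<and> (\<forall>n\<in>{1..M}. gaussian_vector P {1..2 * N} (\<epsilon> n))
   \<and> (\<forall>n\<in>{1..M}. \<forall>k\<in>{1..2 * N}. integral\<^sup>L P (\<epsilon> n k) = 0)
   \<and> (\<forall>n\<in>{1..M}. \<forall>i\<in>{1..N}. \<forall>j\<in>{1..N}.
        integral\<^sup>L P (\<lambda>\<omega>. \<epsilon> n i \<omega> * \<epsilon> n j \<omega>) = T / real M * \<Sigma> (N + i) (N + j)
      \<and> integral\<^sup>L P (\<lambda>\<omega>. \<epsilon> n i \<omega> * \<epsilon> n (N + j) \<omega>)
          = (\<Sigma> j (N + i) - \<Sigma> (N + i) (N + j)) * \<phi> n j
      \<and> integral\<^sup>L P (\<lambda>\<omega>. \<epsilon> n (N + i) \<omega> * \<epsilon> n (N + j) \<omega>)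
          = (\<Sigma> i j + \<Sigma> (N + i) (N + j) - \<Sigma> i (N + j) - \<Sigma> j (N + i))
            * integral {tg (n - 1)..tg n}
                (\<lambda>s. (Tm i / (Tm i - s)) powr \<kappa> i * (Tm j / (Tm j - s)) powr \<kappa> j))"
proof -
  interpret futures_spot_model P N W r T Tm tS F S \<mu>F \<mu>S \<eta>F \<eta>S M \<Sigma> \<sigma>F \<sigma>S Z \<kappa> m \<phi> tg
    by (intro futures_spot_model.intro futures_spot_model_axioms.intro brownian_motion.intro
        brownian_motion_axioms.intro)
      (fact | simp only: \<Sigma>_def \<sigma>F_def \<sigma>S_def Z_def \<kappa>_def m_def \<phi>_def tg_def)+
  show ?thesis
    by (intro exI[of _ noise] conjI ballI ln_spot_step basis_step ln_futures_step indep_noise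
        gaussian_noise integral_noise noise_covariance_spot noise_covariance_spot_basis
        noise_covariance_basis)
qed

end
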